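(* Let $k\ge2$ and $G=BS(1,k)\cong\mathbb{Z}[1/k]\rtimes\mathbb{Z}$. Define a set of words $\mathcal{A}=\mathcal{A}_+\cup\mathcal{A}_-$ as follows. (1) If $k=2r+1$, $r\ge1$: $\mathcal{A}_+=\{a^{x_0}ta^{x_1}t\cdots a^{x_{m-1}}t\mid m\ge1,\ |x_i|\le r\ (0\le i\le m-1)\}\setminus\{(a^{-r}t)^m\mid m\ge1\}$ and $\mathcal{A}_-=\{t^{-1}a^{x_0}t^{-1}a^{x_1}\cdots t^{-1}a^{x_{m-1}}\mid m\ge1,\ |x_i|\le r\}\setminus\{(t^{-1}a^{-r})^m\mid m\ge1\}$. (2) If $k=2r$, $r\ge1$: $\mathcal{A}_+$ is the set of words $a^{x_0}ta^{x_1}t\cdots a^{x_{m-1}}t$ with $m\ge1$, $|x_i|\le r$, and for all $i$: $x_{i-1}=r\Rightarrow 0\le x_i<r$ and $x_{i-1}=-r\Rightarrow -r<x_i\le 0$, with the words $(a^{-r+1}ta^{-r}t)^{m/2}$ and $(a^{-r}ta^{-r+1}t)^{m/2}$ ($m\ge2$ even) removed; $\mathcal{A}_-$ is the set of words $t^{-1}a^{x_0}t^{-1}a^{x_1}\cdots t^{-1}a^{x_{m-1}}$ with $m\ge1$, $|x_i|\le r$, and for all $i$: $x_i=r\Rightarrow 0\le x_{i-1}<r$ and $x_i=-r\Rightarrow -r<x_{i-1}\le 0$, with the words $(t^{-1}a^{r}t^{-1}a^{r-1})^{m/2}$ and $(t^{-1}a^{r-1}t^{-1}a^{r})^{m/2}$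 ($m\ge2$ even) removed. (Indices are read cyclically, $x_{-1}=x_{m-1}$.) Then $\mathcal{A}$, taken modulo cyclic permutations of words, is a set of minimal length conjugacy representatives for the conjugacy classes of $G$ that are not contained in the subgroup $\mathbb{Z}[1/k]$: every such conjugacy class is represented by a word of $\mathcal{A}$, two words of $\mathcal{A}$ represent conjugate elements if and only if they are cyclic permutations of each other, and each word of $\mathcal{A}$ has length equal to the length of its conjugacy class.
   Context: $BS(1,k)=\langle a,t\mid tat^{-1}=a^k\rangle$ is identified with $\mathbb{Z}[1/k]\rtimes\mathbb{Z}$ via $a\mapsto(1,0)$, $t\mapsto(0,1)$, the generator of $\mathbb{Z}$ acting by multiplication by $k$; $\mathbb{Z}[1/k]$ is the subgroup of elements $(x,0)$. $a^x$ denotes $|x|$ copies of $a$ or $a^{-1}$ according to the sign of $x$. Word length is with respect to $\{a,t\}$; the length of a conjugacy class is the minimal length of its elements. *)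

theory Defs
  imports Complex_Main
begin

text \<open>BS(1,k) realised as pairs (x,n) of a rational x (in Z[1/k]) and an integer n,
  with (x,n)(y,m) = (x + k^n y, n+m); a = (1,0), t = (0,1).\<close>

datatype letter = A | Ainv | T | Tinv

definition bs_mult :: "nat \<Rightarrow> rat \<times> int \<Rightarrow> rat \<times> int \<Rightarrow> rat \<times> int" where
  "bs_mult k g h = (fst g + (of_nat k) powi (snd g) * fst h, snd g + snd h)"

definition bs_inv :: "nat \<Rightarrow> rat \<times> int \<Rightarrow> rat \<times> int" where
  "bs_inv k g = (- ((of_nat k) powi (- snd g)) * fst g, - snd g)"

fun letter_val :: "letter \<Rightarrow> rat \<times> int" where
  "letter_val A = (1, 0)"
| "letter_val Ainv = (-1, 0)"
| "letter_val T = (0, 1)"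
| "letter_val Tinv = (0, -1)"

fun bs_eval :: "nat \<Rightarrow> letter list \<Rightarrow> rat \<times> int" where
  "bs_eval k [] = (0, 0)"
| "bs_eval k (l # w) = bs_mult k (letter_val l) (bs_eval k w)"

definition bs_group :: "nat \<Rightarrow> (rat \<times> int) set" where
  "bs_group k = range (bs_eval k)"

definition bs_conj :: "nat \<Rightarrow> rat \<times> int \<Rightarrow> rat \<times> int \<Rightarrow> bool" where
  "bs_conj k g h \<longleftrightarrow> (\<exists>c\<in>bs_group k. h = bs_mult k (bs_mult k c g) (bs_inv k c))"

definition conj_class_length :: "nat \<Rightarrow> rat \<times> int \<Rightarrow> nat" where
  "conj_class_length k g = (LEAST n. \<exists>w. length w = n \<and> bs_conj k (bs_eval k w) g)"

definition apow :: "int \<Rightarrow> letter list" where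
  "apow x = replicate (nat \<bar>x\<bar>) (if x \<ge> 0 then A else Ainv)"

definition plus_word :: "int list \<Rightarrow> letter list" where
  "plus_word xs = concat (map (\<lambda>x. apow x @ [T]) xs)"

definition minus_word :: "int list \<Rightarrow> letter list" where
  "minus_word xs = concat (map (\<lambda>x. Tinv # apow x) xs)"

definition bounded :: "int \<Rightarrow> int list \<Rightarrow> bool" where
  "bounded r xs \<longleftrightarrow> xs \<noteq> [] \<and> (\<forall>x\<in>set xs. \<bar>x\<bar> \<le> r)"

definition prev :: "int list \<Rightarrow> nat \<Rightarrow> int" where
  "prev xs i = xs ! ((i + length xs - 1) mod length xs)"

definition even_cond_plus :: "int \<Rightarrow> int list \<Rightarrow> bool" where
  "even_cond_plus r xs \<longleftrightarrow> (\<forall>i<length xs.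
     (prev xs i = r \<longrightarrow> 0 \<le> xs ! i \<and> xs ! i < r) \<and>
     (prev xs i = -r \<longrightarrow> -r < xs ! i \<and> xs ! i \<le> 0))"

definition even_cond_minus :: "int \<Rightarrow> int list \<Rightarrow> bool" where
  "even_cond_minus r xs \<longleftrightarrow> (\<forall>i<length xs.
     (xs ! i = r \<longrightarrow> 0 \<le> prev xs i \<and> prev xs i < r) \<and>
     (xs ! i = -r \<longrightarrow> -r < prev xs i \<and> prev xs i \<le> 0))"

definition calA_plus :: "nat \<Rightarrow> letter list set" where
  "calA_plus k = (let r = int (k div 2) in
     if odd k then
       {plus_word xs | xs. bounded r xs}
       - {concat (replicate m (apow (-r) @ [T])) | m. m \<ge> 1}
     else
       {plus_word xs | xs. bounded r xs \<and> even_cond_plus r xs}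
       - ({concat (replicate j (apow (-r+1) @ [T] @ apow (-r) @ [T])) | j. j \<ge> 1}
          \<union> {concat (replicate j (apow (-r) @ [T] @ apow (-r+1) @ [T])) | j. j \<ge> 1}))"

definition calA_minus :: "nat \<Rightarrow> letter list set" where
  "calA_minus k = (let r = int (k div 2) in
     if odd k then
       {minus_word xs | xs. bounded r xs}
       - {concat (replicate m ([Tinv] @ apow (-r))) | m. m \<ge> 1}
     else
       {minus_word xs | xs. bounded r xs \<and> even_cond_minus r xs}
       - ({concat (replicate j ([Tinv] @ apow r @ [Tinv] @ apow (r-1))) | j. j \<ge> 1}
          \<union> {concat (replicate j ([Tinv] @ apow (r-1) @ [Tinv] @ apow r)) | j. j \<ge> 1}))"

definition calA :: "nat \<Rightarrow> letter list set" where
  "calA k = calA_plus k \<union> calA_minus k"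

end

theory Submission
  imports Defs
begin

text \<open>
  Conjugation by \<open>(c, j)\<close> maps \<open>(x, n)\<close> to \<open>(k^j x + c (1 - k^n), n)\<close>. For \<open>|n| = m \<ge> 1\<close>
  the class of \<open>(x, n)\<close> is therefore given by an integer modulo \<open>k^m - 1\<close>, up to
  multiplication by powers of \<open>k\<close>. Write that integer as \<open>\<Sum>i<m. k^i x\<^sub>i\<close> with the digits
  read cyclically: multiplication by \<open>k\<close> rotates the digits, and the word
  \<open>a^x\<^sub>0 t \<dots> a^x\<^sub>m\<^sub>-\<^sub>1 t\<close> has length \<open>m + \<Sum>|x\<^sub>i|\<close>.

  Carries \<open>(x\<^sub>p, x\<^sub>p\<^sub>+\<^sub>1) \<mapsto> (x\<^sub>p - s k, x\<^sub>p\<^sub>+\<^sub>1 + s)\<close> keep the class. A digit sequence of least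
  weight in its class, chosen to also minimise a suitable secondary count, is reduced:
  \<open>|x\<^sub>i| \<le> r\<close> and, for even \<open>k\<close>, the neighbour conditions of \<open>calA\<close>. Comparing two reduced
  sequences of one class by the carries of their difference shows that they are rotations of
  each other, except for one pair of exceptional sequences which differ by \<open>k - 1\<close> in every
  position; \<open>calA\<close> keeps one of them.

  Finally, any word with \<open>t\<close>-exponent sum \<open>\<plusminus>m\<close> has at least \<open>m\<close> letters \<open>t\<^sup>\<plusminus>\<^sup>1\<close>, and its
  letters \<open>a\<^sup>\<plusminus>\<^sup>1\<close> yield a digit sequence of its class of weight at most their number; so
  no word of the class is shorter than the reduced one.
\<close>

lemma sum_change_one:
  fixes f g :: "nat \<Rightarrow> 'a::ab_group_add"
  assumes "a < n" "\<forall>i<n. i \<noteq> a \<longrightarrow> g i = f i"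
  shows "(\<Sum>i<n. g i) = (\<Sum>i<n. f i) - f a + g a"
proof -
  have "(\<Sum>i<n. g i) = g a + (\<Sum>i\<in>{..<n}-{a}. g i)"
    using assms(1) by (simp add: sum.remove)
  moreover have "(\<Sum>i<n. f i) = f a + (\<Sum>i\<in>{..<n}-{a}. f i)"
    using assms(1) by (simp add: sum.remove)
  moreover have "(\<Sum>i\<in>{..<n}-{a}. g i) = (\<Sum>i\<in>{..<n}-{a}. f i)"
    using assms(2) by (intro sum.cong) auto
  ultimately show ?thesis by (simp add: algebra_simps)
qed

lemma sum_change_two:
  fixes f g :: "nat \<Rightarrow> 'a::ab_group_add"
  assumes "a < n" "b < n" "a \<noteq> b" "\<forall>i<n. i \<noteq> a \<longrightarrow> i \<noteq> b \<longrightarrow> g i = f i"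
  shows "(\<Sum>i<n. g i) = (\<Sum>i<n. f i) - f a - f b + g a + g b"
proof -
  define h where "h i = (if i = b then f b else g i)" for i
  have "(\<Sum>i<n. g i) = (\<Sum>i<n. h i) - h b + g b"
    by (rule sum_change_one) (use assms in \<open>auto simp: h_def\<close>)
  moreover have "(\<Sum>i<n. h i) = (\<Sum>i<n. f i) - f a + h a"
    by (rule sum_change_one) (use assms in \<open>auto simp: h_def\<close>)
  ultimately show ?thesis using assms(3) by (simp add: h_def algebra_simps)
qed

fun digit_value :: "int \<Rightarrow> int list \<Rightarrow> int" where
  "digit_value k [] = 0"
| "digit_value k (x # xs) = x + k * digit_value k xs"

definition digit_weight :: "int list \<Rightarrow> int" where "digit_weight xs = sum_list (map abs xs)"

lemma digit_value_sum: "digit_value k xs = (\<Sum>i<length xs. k^i * xs ! i)"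
proof (induction xs)
  case Nil thus ?case by simp
next
  case (Cons x xs)
  have "(\<Sum>i<length (x # xs). k^i * (x # xs) ! i) = x + (\<Sum>i<length xs. k^(Suc i) * xs ! i)"
    using sum.lessThan_Suc_shift[of "\<lambda>i. k^i * (x # xs) ! i" "length xs"] by simp
  also have "\<dots> = x + k * (\<Sum>i<length xs. k^i * xs ! i)" by (simp add: sum_distrib_left algebra_simps)
  finally show ?case using Cons by simp
qed

lemma digit_weight_sum: "digit_weight xs = (\<Sum>i<length xs. \<bar>xs ! i\<bar>)"
  unfolding digit_weight_def by (simp add: sum_list_sum_nth atLeast0LessThan)

lemma digit_value_append: "digit_value k (xs @ ys)
    = digit_value k xs + k^length xs * digit_value k ys"
  by (induction xs) (auto simp: algebra_simps)

lemma digit_value_rotate1: "xs \<noteq> [] \<Longrightarrow> k * digit_value k (rotate1 xs)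
    = digit_value k xs + (k^length xs - 1) * hd xs"
  by (cases xs) (auto simp: digit_value_append algebra_simps)

lemma digit_weight_append: "digit_weight (xs @ ys) = digit_weight xs + digit_weight ys"
  by (simp add: digit_weight_def)

lemma digit_weight_rotate: "digit_weight (rotate n xs) = digit_weight xs"
proof -
  have "digit_weight (rotate n xs) = digit_weight (drop (n mod length xs) xs)
      + digit_weight (take (n mod length xs) xs)"
    by (simp add: rotate_drop_take digit_weight_append)
  also have "\<dots> = digit_weight (take (n mod length xs) xs @ drop (n mod length xs) xs)"
    by (simp only: digit_weight_append add.commute)
  also have "\<dots> = digit_weight xs" by (simp only: append_take_drop_id)
  finally show ?thesis .
qed

lemma digit_weight_rev: "digit_weight (rev xs) = digit_weight xs"
  by (simp add: digit_weight_def rev_map[symmetric])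

lemma nth_concat_replicate_pair:
  "i < 2*j \<Longrightarrow> concat (replicate j [c,d]) ! i = (if even i then c else d)"
  by (induction j arbitrary: i) (auto simp: nth_Cons' split: nat.split)

lemma length_concat_replicate_pair: "length (concat (replicate j [c,d])) = 2*j"
  by (induction j) auto

lemma rev_concat_replicate_pair: "rev (concat (replicate j [c,d])) = concat (replicate j [d,c])"
  by (simp add: rev_concat)

lemma even_mod_even_iff: "0 < n \<Longrightarrow> even (n::int) \<Longrightarrow> even (p mod n) \<longleftrightarrow> even p"
proof -
  assume "0 < n" "even n"
  have "p mod n = p - n * (p div n)" by (simp add: minus_div_mult_eq_mod[symmetric] algebra_simps)
  thus ?thesis using \<open>even n\<close> by simp
qed

locale periodic_digits =
  fixes k :: int and m :: nat and r :: int
  assumes k_ge2: "k \<ge> 2" and m_pos: "m \<ge> 1" and r_def: "r = k div 2"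
begin

definition modulus :: int where "modulus = k^m - 1"
definition periodic :: "(int \<Rightarrow> int) \<Rightarrow> bool" where "periodic f \<longleftrightarrow> (\<forall>p. f p = f (p mod int m))"
definition value_of :: "(int \<Rightarrow> int) \<Rightarrow> int" where "value_of f = (\<Sum>i<m. k^i * f (int i))"
definition weight :: "(int \<Rightarrow> int) \<Rightarrow> int" where "weight f = (\<Sum>i<m. \<bar>f (int i)\<bar>)"
definition same_class :: "(int \<Rightarrow> int) \<Rightarrow> (int \<Rightarrow> int) \<Rightarrow> bool" where
  "same_class f g \<longleftrightarrow> modulus dvd (value_of f - value_of g)"

text \<open>Trading \<open>s * k\<close> units at position \<open>p\<close> for \<open>s\<close> units at position \<open>p + 1\<close> keeps the
  class also at \<open>p = m - 1\<close>, because \<open>k * k^(m-1) = k^m \<equiv> 1\<close> modulo \<open>k^m - 1\<close>.\<close>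
definition carry :: "(int \<Rightarrow> int) \<Rightarrow> int \<Rightarrow> int \<Rightarrow> int \<Rightarrow> int" where
  "carry f p s = (\<lambda>q. f q - (if q mod int m = p mod int m then s*k else 0)
                     + (if q mod int m = (p+1) mod int m then s else 0))"

lemma int_m_pos: "int m > 0" using m_pos by simp

lemma periodic_mod: "periodic f \<Longrightarrow> f (p mod int m) = f p" by (simp add: periodic_def)

lemma periodic_cong: "periodic f \<Longrightarrow> q mod int m = p mod int m \<Longrightarrow> f q = f p"
  by (metis periodic_def)

lemma periodic_add_m: "periodic f \<Longrightarrow> f (p + int m) = f p"
  by (metis periodic_def mod_add_self2)

lemma periodic_nat_mod: "periodic f \<Longrightarrow> f (int (nat (p mod int m))) = f p"
  using int_m_pos by (simp add: periodic_def)

lemma nat_mod_m_less: "nat (p mod int m) < m"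
  using int_m_pos by (simp add: nat_less_iff)

lemma periodic_eqI:
  assumes "periodic f" "periodic g" "\<forall>i<m. f (int i) = g (int i)"
  shows "f = g"
proof
  fix p
  have "f p = f (int (nat (p mod int m)))" using periodic_nat_mod[OF assms(1)] by simp
  also have "\<dots> = g (int (nat (p mod int m)))" using assms(3) nat_mod_m_less by blast
  also have "\<dots> = g p" using periodic_nat_mod[OF assms(2)] by simp
  finally show "f p = g p" .
qed

lemma periodic_carry: "periodic f \<Longrightarrow> periodic (carry f p s)"
  unfolding periodic_def carry_def by (metis mod_mod_trivial)

lemma periodic_uminus: "periodic f \<Longrightarrow> periodic (\<lambda>p. - f p)"
  unfolding periodic_def by metis

lemma periodic_shift: "periodic f \<Longrightarrow> periodic (\<lambda>p. f (p + c))"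
  unfolding periodic_def by (metis mod_add_left_eq)

lemma sum_shift_periodic:
  fixes \<phi> :: "int \<Rightarrow> 'a::cancel_comm_monoid_add"
  assumes "\<forall>p. \<phi> (p + int m) = \<phi> p"
  shows "(\<Sum>i<m. \<phi> (int i + 1)) = (\<Sum>i<m. \<phi> (int i))"
proof -
  have "(\<Sum>i<Suc m. \<phi> (int i)) = \<phi> 0 + (\<Sum>i<m. \<phi> (int (Suc i)))"
    using sum.lessThan_Suc_shift[of "\<lambda>i. \<phi> (int i)" m] by simp
  moreover have "(\<Sum>i<Suc m. \<phi> (int i)) = (\<Sum>i<m. \<phi> (int i)) + \<phi> (int m)"
    by simp
  moreover have "\<phi> (int m) = \<phi> 0" using assms[rule_format, of 0] by simp
  ultimately show ?thesis by (simp add: add.commute)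
qed

lemma same_class_refl: "same_class f f" by (simp add: same_class_def)

lemma same_class_sym: "same_class f g \<Longrightarrow> same_class g f"
  unfolding same_class_def by (metis dvd_minus_iff minus_diff_eq)

lemma same_class_trans: "same_class f g \<Longrightarrow> same_class g h \<Longrightarrow> same_class f h"
  unfolding same_class_def by (metis diff_add_cancel dvd_add add_diff_eq)

lemma value_of_uminus: "value_of (\<lambda>p. - f p) = - value_of f"
  by (simp add: value_of_def sum_negf)

lemma weight_uminus: "weight (\<lambda>p. - f p) = weight f"
  by (simp add: weight_def)

lemma same_class_uminus: "same_class f g \<Longrightarrow> same_class (\<lambda>p. - f p) (\<lambda>p. - g p)"
  unfolding same_class_def value_of_uminus
    by (metis dvd_minus_iff minus_diff_eq diff_minus_eq_add uminus_add_conv_diff)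

lemma weight_nonneg: "weight f \<ge> 0" by (simp add: weight_def sum_nonneg)

lemma k_cases: "k = 2*r \<or> k = 2*r + 1" unfolding r_def by presburger

lemma r_ge1: "r \<ge> 1" unfolding r_def using k_ge2 by linarith

lemma succ_mod_neq: "m \<ge> 2 \<Longrightarrow> (p+1) mod int m \<noteq> p mod int m"
proof
  assume "m \<ge> 2" "(p+1) mod int m = p mod int m"
  hence "int m dvd (p + 1 - p)" by (metis mod_eq_dvd_iff)
  thus False using \<open>m \<ge> 2\<close> by simp
qed

lemma carry_at: "m \<ge> 2 \<Longrightarrow> carry f p s p = f p - s*k"
  using succ_mod_neq[of p] by (simp add: carry_def)

lemma carry_at_succ: "m \<ge> 2 \<Longrightarrow> carry f p s (p+1) = f (p+1) + s"
  using succ_mod_neq[of p] by (simp add: carry_def)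

lemma carry_other:
  "q mod int m \<noteq> p mod int m \<Longrightarrow> q mod int m \<noteq> (p+1) mod int m \<Longrightarrow> carry f p s q = f q"
  by (simp add: carry_def)

lemma carry_period1:
  assumes "m = 1"
  shows "carry f p s q = f q - s*k + s"
proof -
  have "q mod int m = 0" "p mod int m = 0" "(p+1) mod int m = 0" using assms by auto
  thus ?thesis by (simp add: carry_def)
qed

lemma sum_indicator_mod:
  fixes c :: "nat \<Rightarrow> 'a::comm_monoid_add"
  shows "(\<Sum>i<m. if int i mod int m = p mod int m then c i else 0) = c (nat (p mod int m))"
proof -
  have "(\<Sum>i<m. if int i mod int m = p mod int m then c i else 0)
      = (\<Sum>i<m. if i = nat (p mod int m) then c i else 0)"
    using int_m_pos by (intro sum.cong refl) auto
  also have "\<dots> = c (nat (p mod int m))" using nat_mod_m_less[of p] by simp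
  finally show ?thesis .
qed

lemma sum_pow_indicator_mod:
  "(\<Sum>i<m. k^i * (if int i mod int m = p mod int m then c else 0)) = k^(nat (p mod int m)) * c"
proof -
  have "k^i * (if b then c else 0) = (if b then k^i * c else 0)" for i b by simp
  thus ?thesis using sum_indicator_mod[of p "\<lambda>i. k^i * c"] by (simp only:)
qed

lemma modulus_dvd_pow_succ_mod:
  "modulus dvd (k^(nat ((p+1) mod int m)) - k^(nat (p mod int m) + 1))"
proof -
  define a where "a = nat (p mod int m)"
  have a: "a < m" using nat_mod_m_less a_def by simp
  have "(p+1) mod int m = (int a + 1) mod int m"
    using int_m_pos by (simp add: a_def mod_add_left_eq)
  show ?thesis
  proof (cases "a + 1 < m")
    case True
    hence "nat ((p+1) mod int m) = a + 1" using \<open>(p+1) mod int m = (int a + 1) mod int m\<close> by simp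
    thus ?thesis by (simp add: a_def)
  next
    case False
    hence "a + 1 = m" using a by simp
    hence "(int a + 1) mod int m = 0" by (metis mod_self of_nat_Suc add.commute Suc_eq_plus1)
    hence "nat ((p+1) mod int m) = 0" using \<open>(p+1) mod int m = (int a + 1) mod int m\<close> by simp
    thus ?thesis using \<open>a + 1 = m\<close> unfolding modulus_def
      by (simp add: a_def[symmetric]) (metis dvd_minus_iff minus_diff_eq dvd_refl)
  qed
qed

lemma same_class_carry: "same_class (carry f p s) f"
proof -
  have "value_of (carry f p s) = (\<Sum>i<m. k^i * f (int i))
      - (\<Sum>i<m. k^i * (if int i mod int m = p mod int m then s*k else 0))
      + (\<Sum>i<m. k^i * (if int i mod int m = (p+1) mod int m then s else 0))"
    by (simp add: value_of_def carry_def algebra_simps sum.distrib sum_subtractf)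
  also have "\<dots> = value_of f - k^(nat (p mod int m)) * (s*k) + k^(nat ((p+1) mod int m)) * s"
    by (simp only: sum_pow_indicator_mod value_of_def)
  finally have "value_of (carry f p s) - value_of f
      = s * (k^(nat ((p+1) mod int m)) - k^(nat (p mod int m) + 1))"
    by (simp add: algebra_simps)
  thus ?thesis unfolding same_class_def using modulus_dvd_pow_succ_mod by simp
qed

lemma sum_carry:
  fixes \<phi> :: "int \<Rightarrow> 'a::ab_group_add"
  assumes "m \<ge> 2" "periodic f"
  shows "(\<Sum>i<m. \<phi> (carry f p s (int i))) = (\<Sum>i<m. \<phi> (f (int i)))
           - \<phi> (f p) - \<phi> (f (p+1)) + \<phi> (f p - s*k) + \<phi> (f (p+1) + s)"
proof -
  define a where "a = nat (p mod int m)"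
  define b where "b = nat ((p+1) mod int m)"
  have ab: "a < m" "b < m" using nat_mod_m_less a_def b_def by auto
  have ia: "int a = p mod int m" "int b = (p+1) mod int m" using int_m_pos
    by (auto simp: a_def b_def)
  have "a \<noteq> b" using succ_mod_neq[OF assms(1), of p] ia by auto
  have "(\<Sum>i<m. \<phi> (carry f p s (int i))) = (\<Sum>i<m. \<phi> (f (int i)))
      - \<phi> (f (int a)) - \<phi> (f (int b)) + \<phi> (carry f p s (int a)) + \<phi> (carry f p s (int b))"
  proof (rule sum_change_two[OF ab \<open>a \<noteq> b\<close>], intro allI impI)
    fix i assume i: "i < m" "i \<noteq> a" "i \<noteq> b"
    hence "int i mod int m \<noteq> p mod int m" "int i mod int m \<noteq> (p+1) mod int m" using ia by auto
    thus "\<phi> (carry f p s (int i)) = \<phi> (f (int i))" by (simp add: carry_other)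
  qed
  moreover have "f (int a) = f p" "f (int b) = f (p+1)"
    "carry f p s (int a) = carry f p s p" "carry f p s (int b) = carry f p s (p+1)"
    using ia assms(2) periodic_carry[OF assms(2)] by (auto simp: periodic_def)
  ultimately show ?thesis using carry_at[OF assms(1)] carry_at_succ[OF assms(1)] by simp
qed

lemma weight_carry:
  assumes "m \<ge> 2" "periodic f"
  shows "weight (carry f p s) = weight f - \<bar>f p\<bar> - \<bar>f (p+1)\<bar> + \<bar>f p - s*k\<bar> + \<bar>f (p+1) + s\<bar>"
  unfolding weight_def by (rule sum_carry[OF assms])

lemma weight_period1:
  assumes "m = 1" "periodic f"
  shows "weight f = \<bar>f p\<bar>"
proof -
  have "weight f = \<bar>f 0\<bar>" unfolding weight_def using assms(1) by simp
  thus ?thesis using periodic_mod[OF assms(2), of p] assms(1) by simp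
qed

lemma weight_carry_period1:
  assumes "m = 1" "periodic f"
  shows "weight (carry f p s) = \<bar>f p - s*k + s\<bar>"
  using weight_period1[OF assms(1) periodic_carry[OF assms(2)], of p]
  unfolding carry_period1[OF assms(1)] .

definition weight_min :: "(int \<Rightarrow> int) \<Rightarrow> bool" where
  "weight_min f \<longleftrightarrow> periodic f \<and> (\<forall>g. periodic g \<and> same_class g f \<longrightarrow> weight f \<le> weight g)"

lemma weight_min_le_class: "weight_min f \<Longrightarrow> periodic g \<Longrightarrow> same_class g f \<Longrightarrow> weight f \<le> weight g"
  unfolding weight_min_def by blast

lemma weight_min_same_weight:
  "weight_min f \<Longrightarrow> periodic g \<Longrightarrow> same_class g f \<Longrightarrow> weight g = weight f \<Longrightarrow> weight_min g"
  unfolding weight_min_def by (metis same_class_trans)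

lemma weight_min_le_carry: "weight_min f \<Longrightarrow> weight f \<le> weight (carry f p s)"
  unfolding weight_min_def using periodic_carry same_class_carry by blast

lemma weight_min_uminus:
  assumes "weight_min f"
  shows "weight_min (\<lambda>p. - f p)"
  unfolding weight_min_def
proof (intro conjI allI impI)
  show "periodic (\<lambda>p. - f p)" using assms periodic_uminus weight_min_def by blast
  fix g assume g: "periodic g \<and> same_class g (\<lambda>p. - f p)"
  hence "same_class (\<lambda>p. - g p) f" using same_class_uminus[of g "\<lambda>p. - f p"] by simp
  hence "weight f \<le> weight (\<lambda>p. - g p)" using assms g periodic_uminus unfolding weight_min_def
    by blast
  thus "weight (\<lambda>p. - f p) \<le> weight g" by (simp add: weight_uminus)
qed

lemma weight_min_le:
  assumes "weight_min f"
  shows "f p \<le> k - r"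
proof (rule ccontr)
  assume c: "\<not> f p \<le> k - r"
  have pf: "periodic f" using assms weight_min_def by blast
  have le: "weight f \<le> weight (carry f p 1)" by (rule weight_min_le_carry[OF assms])
  show False
  proof (cases "m = 1")
    case True
    from weight_carry_period1[OF True pf, of p 1] weight_period1[OF True pf, of p] le k_cases
      r_ge1 c
    show False by auto
  next
    case False
    hence m2: "m \<ge> 2" using m_pos by simp
    from weight_carry[OF m2 pf, of p 1] le k_cases r_ge1 c show False
      by (auto simp: abs_if split: if_splits)
  qed
qed

lemma weight_min_ge: "weight_min f \<Longrightarrow> - (k - r) \<le> f p"
  using weight_min_le[OF weight_min_uminus, of f p] by simp

lemma weight_min_max_next:
  assumes "weight_min f" "m \<ge> 2" "f p = k - r"
  shows "f (p+1) \<ge> 0"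
proof (rule ccontr)
  assume c: "\<not> f (p+1) \<ge> 0"
  have pf: "periodic f" using assms weight_min_def by blast
  have le: "weight f \<le> weight (carry f p 1)" by (rule weight_min_le_carry[OF assms(1)])
  from weight_carry[OF assms(2) pf, of p 1] le k_cases r_ge1 c assms(3) show False
    by (auto simp: abs_if split: if_splits)
qed

lemma weight_min_min_next: "weight_min f \<Longrightarrow> m \<ge> 2 \<Longrightarrow> f p = - (k - r) \<Longrightarrow> f (p+1) \<le> 0"
  using weight_min_max_next[OF weight_min_uminus[of f]] by fastforce

lemma weight_min_period1:
  assumes "weight_min f" "m = 1"
  shows "\<bar>f p\<bar> < k - r"
proof -
  have "g p \<noteq> k - r" if g: "weight_min g" for g
  proof
    assume c: "g p = k - r"
    have pg: "periodic g" using g weight_min_def by blast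
    from weight_carry_period1[OF assms(2) pg, of p 1] weight_period1[OF assms(2) pg, of p]
      weight_min_le_carry[OF g, of p 1] k_cases r_ge1 c
    show False by (auto simp: abs_if split: if_splits)
  qed
  from this[OF assms(1)] this[OF weight_min_uminus[OF assms(1)]]
    weight_min_le[OF assms(1), of p] weight_min_ge[OF assms(1), of p]
  show ?thesis by auto
qed

definition lex_min :: "((int \<Rightarrow> int) \<Rightarrow> nat) \<Rightarrow> (int \<Rightarrow> int) \<Rightarrow> bool" where
  "lex_min \<sigma> f \<longleftrightarrow> periodic f \<and> (\<forall>g. periodic g \<and> same_class g f \<longrightarrow>
     weight f < weight g \<or> (weight f = weight g \<and> \<sigma> f \<le> \<sigma> g))"

lemma exists_lex_min:
  assumes "periodic y"
  shows "\<exists>f. lex_min \<sigma> f \<and> same_class f y"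
proof -
  obtain f0 where f0: "periodic f0 \<and> same_class f0 y"
    and f0_min: "\<And>g. periodic g \<and> same_class g y \<Longrightarrow> nat (weight f0) \<le> nat (weight g)"
    using ex_has_least_nat[of "\<lambda>f. periodic f \<and> same_class f y" y "\<lambda>f. nat (weight f)"]
      assms same_class_refl by blast
  obtain f where f: "periodic f \<and> same_class f y \<and> weight f = weight f0"
    and f_min: "\<And>g. periodic g \<and> same_class g y \<and> weight g = weight f0 \<Longrightarrow> \<sigma> f \<le> \<sigma> g"
    using ex_has_least_nat[of "\<lambda>f. periodic f \<and> same_class f y \<and> weight f = weight f0" f0 \<sigma>] f0
    by blast
  have "weight f < weight g \<or> (weight f = weight g \<and> \<sigma> f \<le> \<sigma> g)"
    if g: "periodic g" "same_class g f" for g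
  proof -
    have gy: "same_class g y" using g f same_class_trans by blast
    have "weight f \<le> weight g"
      using f0_min[of g] g(1) gy f weight_nonneg[of g] weight_nonneg[of f0] by simp
    thus ?thesis using f_min[of g] g(1) gy f by auto
  qed
  thus ?thesis unfolding lex_min_def using f by blast
qed

lemma lex_min_weight_min: "lex_min \<sigma> f \<Longrightarrow> weight_min f"
  unfolding lex_min_def weight_min_def by fastforce

lemma lex_min_le:
  "lex_min \<sigma> f \<Longrightarrow> periodic g \<Longrightarrow> same_class g f \<Longrightarrow> weight g = weight f \<Longrightarrow> \<sigma> f \<le> \<sigma> g"
  unfolding lex_min_def by force

lemma lex_min_uminus:
  assumes "lex_min \<sigma> f" "\<And>g. \<sigma> (\<lambda>p. - g p) = \<sigma> g"
  shows "lex_min \<sigma> (\<lambda>p. - f p)"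
  unfolding lex_min_def
proof (intro conjI allI impI)
  show "periodic (\<lambda>p. - f p)" using assms(1) periodic_uminus lex_min_def by blast
  fix g assume g: "periodic g \<and> same_class g (\<lambda>p. - f p)"
  hence "same_class (\<lambda>p. - g p) f" using same_class_uminus[of g "\<lambda>p. - f p"] by simp
  hence "weight f < weight (\<lambda>p. - g p) \<or> (weight f = weight (\<lambda>p. - g p) \<and> \<sigma> f \<le> \<sigma> (\<lambda>p. - g p))"
    using assms(1) g periodic_uminus unfolding lex_min_def by blast
  thus "weight (\<lambda>p. - f p) < weight g \<or> (weight (\<lambda>p. - f p) = weight g \<and> \<sigma> (\<lambda>p. - f p) \<le> \<sigma> g)"
    using assms(2)[of f] assms(2)[of g] by (simp add: weight_uminus)
qed

definition n_excess :: "(int \<Rightarrow> int) \<Rightarrow> int" where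
  "n_excess f = (\<Sum>i<m. if \<bar>f (int i)\<bar> > r then 1 else 0)"

definition n_top :: "(int \<Rightarrow> int) \<Rightarrow> int" where
  "n_top f = (\<Sum>i<m. if f (int i) = r then 1 else 0)"

lemma n_excess_nonneg: "0 \<le> n_excess f" unfolding n_excess_def by (rule sum_nonneg) auto

lemma n_top_nonneg: "0 \<le> n_top f" unfolding n_top_def by (rule sum_nonneg) auto

text \<open>For odd \<open>k\<close> an entry \<open>r + 1\<close> is carried to the right; this terminates because
  the carry only propagates through entries equal to \<open>r\<close>.\<close>

lemma odd_excess_chain:
  assumes odd: "k = 2*r + 1" and "weight_min f" "f p = r + 1"
  shows "\<exists>g. periodic g \<and> same_class g f \<and> weight g = weight f \<and> n_excess g < n_excess f"
  using assms(2,3)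
proof (induction "nat (n_top f)" arbitrary: f p rule: less_induct)
  case less
  note mf = less.prems(1) and fp = less.prems(2)
  have pf: "periodic f" using mf weight_min_def by blast
  have m2: "m \<ge> 2"
    using weight_min_period1[OF mf, of p] fp odd m_pos by (cases "m = 1") auto
  define g where "g = carry f p 1"
  have pg: "periodic g" using periodic_carry[OF pf] g_def by simp
  have cg: "same_class g f" using same_class_carry g_def by simp
  have b0: "f (p+1) \<ge> 0" using weight_min_max_next[OF mf m2, of p] fp odd by simp
  have wg: "weight g = weight f"
    using weight_carry[OF m2 pf, of p 1] fp b0 odd r_ge1 unfolding g_def by simp
  have mg: "weight_min g" by (rule weight_min_same_weight[OF mf pg cg wg])
  have gp1: "g (p+1) = f (p+1) + 1" using carry_at_succ[OF m2] g_def by simp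
  have br: "f (p+1) \<le> r" using weight_min_le[OF mg, of "p+1"] gp1 odd by simp
  have Eg: "n_excess g = n_excess f - 1 + (if f (p+1) = r then 1 else 0)"
    unfolding n_excess_def g_def sum_carry[OF m2 pf, of "\<lambda>x. if \<bar>x\<bar> > r then 1 else 0" p 1]
    using fp b0 br odd r_ge1 by auto
  show ?case
  proof (cases "f (p+1) = r")
    case False
    thus ?thesis using pg cg wg Eg by auto
  next
    case True
    have "n_top g = n_top f - 1"
      unfolding n_top_def g_def sum_carry[OF m2 pf, of "\<lambda>x. if x = r then 1 else 0" p 1]
      using fp True odd r_ge1 by auto
    hence lt: "nat (n_top g) < nat (n_top f)" using n_top_nonneg[of g] by linarith
    have "g (p+1) = r + 1" using gp1 True by simp
    then obtain h where h: "periodic h" "same_class h g" "weight h = weight g"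
      "n_excess h < n_excess g"
      using less.hyps[OF lt mg] by blast
    show ?thesis using h same_class_trans[OF h(2) cg] wg Eg True by (intro exI[of _ h]) auto
  qed
qed

lemma odd_lex_min_no_excess:
  assumes odd: "k = 2*r + 1" and f: "lex_min (\<lambda>f. nat (n_excess f)) f"
  shows "f p \<noteq> r + 1"
proof
  assume "f p = r + 1"
  then obtain g where "periodic g" "same_class g f" "weight g = weight f" "n_excess g < n_excess f"
    using odd_excess_chain[OF odd lex_min_weight_min[OF f]] by blast
  thus False using lex_min_le[OF f] n_excess_nonneg[of g] by fastforce
qed

lemma odd_bounded_in_class:
  assumes odd: "k = 2*r + 1" and py: "periodic y"
  shows "\<exists>f. periodic f \<and> same_class f y \<and> (\<forall>p. \<bar>f p\<bar> \<le> r) \<and> weight f \<le> weight y"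
proof -
  obtain f where f: "lex_min (\<lambda>f. nat (n_excess f)) f" and fy: "same_class f y"
    using exists_lex_min[OF py] by blast
  have mf: "weight_min f" by (rule lex_min_weight_min[OF f])
  have "n_excess (\<lambda>p. - g p) = n_excess g" for g by (simp add: n_excess_def)
  hence f': "lex_min (\<lambda>f. nat (n_excess f)) (\<lambda>p. - f p)" using lex_min_uminus[OF f] by simp
  have "\<bar>f p\<bar> \<le> r" for p
    using weight_min_le[OF mf, of p] weight_min_ge[OF mf, of p] odd
      odd_lex_min_no_excess[OF odd f, of p] odd_lex_min_no_excess[OF odd f', of p] by auto
  moreover have "weight f \<le> weight y"
    using mf py fy same_class_sym unfolding weight_min_def by blast
  ultimately show ?thesis using mf fy unfolding weight_min_def by blast
qed

lemma mod_m_add_cong: "q mod int m = p mod int m \<Longrightarrow> (q + c) mod int m = (p + c) mod int m"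
  by (metis mod_add_left_eq)

lemma add_mod_m_eq_iff: "(q + c) mod int m = (p + c) mod int m \<longleftrightarrow> q mod int m = p mod int m"
  using mod_m_add_cong[of "q + c" "p + c" "- c"] mod_m_add_cong[of q p c] by auto

lemma add_mod_m_neq:
  assumes "m \<ge> 3" "c = 1 \<or> c = 2"
  shows "(q + c) mod int m \<noteq> q mod int m"
proof
  assume "(q + c) mod int m = q mod int m"
  hence "int m dvd c" by (metis mod_eq_dvd_iff add_diff_cancel_left')
  moreover have "c > 0" using assms(2) by auto
  ultimately have "int m \<le> c" using zdvd_imp_le by blast
  thus False using assms by auto
qed

definition extreme_pair :: "(int \<Rightarrow> int) \<Rightarrow> int \<Rightarrow> bool" where
  "extreme_pair f i \<longleftrightarrow> (f i = r \<and> f (i+1) = r) \<or> (f i = - r \<and> f (i+1) = - r)"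

definition n_extreme_pairs :: "(int \<Rightarrow> int) \<Rightarrow> int" where
  "n_extreme_pairs f = (\<Sum>i<m. if extreme_pair f (int i) then 1 else 0)"

lemma n_extreme_pairs_nonneg: "0 \<le> n_extreme_pairs f"
  unfolding n_extreme_pairs_def by (rule sum_nonneg) auto

lemma extreme_pair_cong: "periodic f \<Longrightarrow> q mod int m = p mod int m
    \<Longrightarrow> extreme_pair f q = extreme_pair f p"
  unfolding extreme_pair_def using periodic_cong mod_m_add_cong by metis

lemma even_period2_no_extreme_pair:
  assumes ev: "k = 2*r" and m2: "m = 2" and mf: "weight_min f" and fp: "f p = r" "f (p+1) = r"
  shows False
proof -
  have pf: "periodic f" using mf weight_min_def by blast
  define g1 where "g1 = carry f p 1"
  define g where "g = carry g1 (p+1) 1"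
  have pg1: "periodic g1" using periodic_carry[OF pf] g1_def by simp
  have pg: "periodic g" using periodic_carry[OF pg1] g_def by simp
  have cg: "same_class g f" unfolding g_def g1_def
    by (rule same_class_trans[OF same_class_carry same_class_carry])
  have m2': "m \<ge> 2" using m2 by simp
  have a1: "g1 p = - r" "g1 (p+1) = r + 1"
    using carry_at[OF m2'] carry_at_succ[OF m2'] fp ev g1_def by auto
  have "(p + 1 + 1) mod int m = p mod int m" using m2 by (simp add: add.assoc)
  hence a2: "g1 (p+1+1) = - r" using periodic_cong[OF pg1, of "p+1+1" p] a1 by simp
  have w1: "weight g1 = weight f + 1" using weight_carry[OF m2' pf, of p 1] fp ev r_ge1 g1_def
    by simp
  have "weight g = weight g1 - (r+1) - r + (r - 1) + (r - 1)"
    using weight_carry[OF m2' pg1, of "p+1" 1] a1 a2 ev r_ge1 g_def by simp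
  thus False using w1 weight_min_le_class[OF mf pg cg] by simp
qed

lemma even_double_carry:
  assumes ev: "k = 2*r" and m3: "m \<ge> 3" and mf: "weight_min f" and fp: "f p = r" "f (p+1) = r"
  obtains g where "weight_min g" "same_class g f" "weight g = weight f"
    "g p = - r" "g (p+1) = 1 - r" "g (p+2) = f (p+2) + 1" "0 \<le> f (p+2)" "n_top g < n_top f"
    "\<And>q. q mod int m \<noteq> p mod int m \<Longrightarrow> q mod int m \<noteq> (p+1) mod int m \<Longrightarrow>
          q mod int m \<noteq> (p+2) mod int m \<Longrightarrow> g q = f q"
proof -
  have pf: "periodic f" using mf weight_min_def by blast
  have m2: "m \<ge> 2" using m3 by simp
  define g1 where "g1 = carry f p 1"
  define g where "g = carry g1 (p+1) 1"
  have pg1: "periodic g1" using periodic_carry[OF pf] g1_def by simp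
  have pg: "periodic g" using periodic_carry[OF pg1] g_def by simp
  have cg: "same_class g f" unfolding g_def g1_def
    by (rule same_class_trans[OF same_class_carry same_class_carry])
  have d02: "(p+2) mod int m \<noteq> p mod int m" using add_mod_m_neq[OF m3, of 2 p] by simp
  have d12: "(p+2) mod int m \<noteq> (p+1) mod int m"
    using add_mod_m_neq[OF m3, of 1 "p+1"] by (simp add: add.assoc)
  have a1: "g1 p = - r" "g1 (p+1) = r + 1" using carry_at[OF m2] carry_at_succ[OF m2] fp ev g1_def
    by auto
  have g1o: "\<And>q. q mod int m \<noteq> p mod int m \<Longrightarrow> q mod int m \<noteq> (p+1) mod int m \<Longrightarrow> g1 q = f q"
    using carry_other g1_def by simp
  have go: "\<And>q. q mod int m \<noteq> (p+1) mod int m \<Longrightarrow> q mod int m \<noteq> (p+2) mod int m \<Longrightarrow> g q = g1 q"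
    using carry_other g_def by (simp add: add.assoc)
  have g1b: "g1 (p+1+1) = f (p+2)" using g1o[of "p+2"] d02 d12 by (simp add: add.assoc)
  have b0: "f (p+2) \<ge> 0" using weight_min_max_next[OF mf m2, of "p+1"] fp ev
    by (simp add: add.assoc)
  have w1: "weight g1 = weight f + 1" using weight_carry[OF m2 pf, of p 1] fp ev r_ge1 g1_def
    by simp
  have wg: "weight g = weight f"
    using weight_carry[OF m2 pg1, of "p+1" 1] a1 g1b ev r_ge1 b0 w1 g_def by simp
  have mg: "weight_min g" by (rule weight_min_same_weight[OF mf pg cg wg])
  have gp2: "g (p+2) = f (p+2) + 1"
    using carry_at_succ[OF m2, of g1 "p+1" 1] g1b g_def by (simp add: add.assoc)
  have "f (p+2) \<le> r - 1" using weight_min_le[OF mg, of "p+2"] gp2 ev by simp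
  hence "n_top g \<le> n_top g1 + 1"
    unfolding n_top_def g_def sum_carry[OF m2 pg1, of "\<lambda>x. if x = r then 1 else 0" "p+1" 1]
    using a1 g1b ev r_ge1 by auto
  moreover have "n_top g1 = n_top f - 2"
    unfolding n_top_def g1_def sum_carry[OF m2 pf, of "\<lambda>x. if x = r then 1 else 0" p 1]
    using fp ev r_ge1 by auto
  moreover have "g p = - r"
    using go[of p] add_mod_m_neq[OF m3, of 1 p] d02 a1 by auto
  moreover have "g (p+1) = 1 - r" using carry_at[OF m2] a1 ev g_def by simp
  moreover have "g q = f q" if "q mod int m \<noteq> p mod int m" "q mod int m \<noteq> (p+1) mod int m"
    "q mod int m \<noteq> (p+2) mod int m" for q
    using go[OF that(2,3)] g1o[OF that(1,2)] by simp
  ultimately show ?thesis by (intro that[OF mg cg wg _ _ gp2 b0]) auto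
qed

lemma extreme_pair_double_carry:
  assumes m3: "m \<ge> 3" and pf: "periodic f" and pg: "periodic g"
    and gp: "g p = - r" "g (p+1) = 1 - r" and prev: "f (p - 1) \<noteq> - r"
    and same: "\<And>q. q mod int m \<noteq> p mod int m \<Longrightarrow> q mod int m \<noteq> (p+1) mod int m \<Longrightarrow>
                  q mod int m \<noteq> (p+2) mod int m \<Longrightarrow> g q = f q"
    and q: "q mod int m \<noteq> p mod int m" "q mod int m \<noteq> (p+2) mod int m" "extreme_pair g q"
  shows "extreme_pair f q"
proof -
  consider "q mod int m = (p+1) mod int m" | "(q+1) mod int m = p mod int m"
    | "q mod int m \<noteq> (p+1) mod int m" "(q+1) mod int m \<noteq> p mod int m"
    by blast
  thus ?thesis
  proof cases
    case 1
    thus ?thesis using periodic_cong[OF pg 1] gp q(3) r_ge1 unfolding extreme_pair_def by auto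
  next
    case 2
    have "q mod int m = (p - 1) mod int m" using 2 add_mod_m_eq_iff[of q 1 "p - 1"] by simp
    hence "f q \<noteq> - r" using periodic_cong[OF pf] prev by metis
    moreover have "q mod int m \<noteq> (p+1) mod int m"
    proof
      assume "q mod int m = (p+1) mod int m"
      hence "(q+1) mod int m = (p+2) mod int m" using mod_m_add_cong[of q "p+1" 1]
        by (simp add: add.assoc)
      thus False using 2 add_mod_m_neq[OF m3, of 2 p] by simp
    qed
    ultimately have "g q \<noteq> - r" using same q(1,2) by auto
    moreover have "g (q+1) = - r" using periodic_cong[OF pg 2] gp by simp
    ultimately show ?thesis using q(3) r_ge1 unfolding extreme_pair_def by auto
  next
    case 3
    have "(q+1) mod int m \<noteq> (p+1) mod int m" using q(1) add_mod_m_eq_iff by blast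
    moreover have "(q+1) mod int m \<noteq> (p+2) mod int m"
      using 3(1) add_mod_m_eq_iff[of q 1 "p+1"] by (simp add: add.assoc)
    ultimately have "g (q+1) = f (q+1)" "g q = f q" using same 3 q(1,2) by auto
    thus ?thesis using q(3) unfolding extreme_pair_def by auto
  qed
qed

lemma n_extreme_pairs_double_carry:
  assumes m3: "m \<ge> 3" and pf: "periodic f" and pg: "periodic g"
    and fp: "f p = r" "f (p+1) = r" and gp: "g p = - r" "g (p+1) = 1 - r"
    and prev: "f (p - 1) \<noteq> - r"
    and same: "\<And>q. q mod int m \<noteq> p mod int m \<Longrightarrow> q mod int m \<noteq> (p+1) mod int m \<Longrightarrow>
                  q mod int m \<noteq> (p+2) mod int m \<Longrightarrow> g q = f q"
  shows "n_extreme_pairs g \<le> n_extreme_pairs f - 1 + (if extreme_pair g (p+2) then 1 else 0)"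
proof -
  define e where "e = (if extreme_pair g (p+2) then 1 else (0::int))"
  have p2: "(p+2) mod int m \<noteq> p mod int m" using add_mod_m_neq[OF m3, of 2 p] by simp
  have "(if extreme_pair g q then 1 else 0) \<le> (if extreme_pair f q then 1 else 0)
      - (if q mod int m = p mod int m then 1 else 0) +
        (if q mod int m = (p+2) mod int m then e else 0)"
    for q :: int
  proof -
    consider "q mod int m = (p+2) mod int m" | "q mod int m = p mod int m"
      | "q mod int m \<noteq> p mod int m" "q mod int m \<noteq> (p+2) mod int m" by blast
    thus ?thesis
    proof cases
      case 1 thus ?thesis using extreme_pair_cong[OF pg 1] p2 e_def by auto
    next
      case 2
      have "\<not> extreme_pair g p" "extreme_pair f p" unfolding extreme_pair_def using fp gp r_ge1
        by auto
      thus ?thesis using 2 p2 extreme_pair_cong[OF pg 2] extreme_pair_cong[OF pf 2] by auto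
    next
      case 3 thus ?thesis using extreme_pair_double_carry[OF m3 pf pg gp prev same] by auto
    qed
  qed
  hence "n_extreme_pairs g \<le> (\<Sum>i<m. (if extreme_pair f (int i) then 1 else 0)
      - (if int i mod int m = p mod int m then 1 else 0) +
        (if int i mod int m = (p+2) mod int m then e else 0))"
    unfolding n_extreme_pairs_def by (intro sum_mono)
  also have "\<dots> = n_extreme_pairs f - 1 + e"
    unfolding sum.distrib sum_subtractf sum_indicator_mod n_extreme_pairs_def by simp
  finally show ?thesis unfolding e_def .
qed

lemma even_extreme_chain:
  assumes ev: "k = 2*r" and m3: "m \<ge> 3" and "weight_min f" "f p = r" "f (p+1) = r"
  shows "\<exists>g. periodic g \<and> same_class g f \<and> weight g = weight f
      \<and> n_extreme_pairs g < n_extreme_pairs f"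
  using assms(3-5)
proof (induction "nat (n_top f)" arbitrary: f p rule: less_induct)
  case less
  note mf = less.prems(1) and fp = less.prems(2,3)
  have pf: "periodic f" using mf weight_min_def by blast
  obtain g where mg: "weight_min g" and cg: "same_class g f" and wg: "weight g = weight f"
    and gp: "g p = - r" "g (p+1) = 1 - r" and gp2: "g (p+2) = f (p+2) + 1" and b0: "0 \<le> f (p+2)"
    and Rg: "n_top g < n_top f" and same: "\<And>q. q mod int m \<noteq> p mod int m \<Longrightarrow>
      q mod int m \<noteq> (p+1) mod int m \<Longrightarrow> q mod int m \<noteq> (p+2) mod int m \<Longrightarrow> g q = f q"
    using even_double_carry[OF ev m3 mf fp] by blast
  have pg: "periodic g" using mg weight_min_def by blast
  have "f (p - 1) \<noteq> - r"
    using weight_min_min_next[OF mf, of "p - 1"] m3 fp ev r_ge1 by auto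
  hence V: "n_extreme_pairs g \<le> n_extreme_pairs f - 1 + (if extreme_pair g (p+2) then 1 else 0)"
    using n_extreme_pairs_double_carry[OF m3 pf pg fp gp _ same] by blast
  show ?case
  proof (cases "extreme_pair g (p+2)")
    case False
    thus ?thesis using V pg cg wg by auto
  next
    case True
    hence "g (p+2) = r \<and> g (p+2+1) = r" unfolding extreme_pair_def using gp2 b0 r_ge1 by auto
    moreover have "nat (n_top g) < nat (n_top f)" using Rg n_top_nonneg[of g] by linarith
    ultimately obtain h where h: "periodic h" "same_class h g" "weight h = weight g"
      "n_extreme_pairs h < n_extreme_pairs g"
      using less.hyps mg by blast
    show ?thesis using h same_class_trans[OF h(2) cg] wg V True by (intro exI[of _ h]) auto
  qed
qed

lemma even_lex_min_no_extreme_pair: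
  assumes ev: "k = 2*r" and f: "lex_min (\<lambda>f. nat (n_extreme_pairs f)) f"
  shows "\<not> (f p = r \<and> f (p+1) = r)"
proof
  assume c: "f p = r \<and> f (p+1) = r"
  have mf: "weight_min f" by (rule lex_min_weight_min[OF f])
  consider "m = 1" | "m = 2" | "m \<ge> 3" using m_pos by linarith
  thus False
  proof cases
    case 1 thus False using weight_min_period1[OF mf 1, of p] c ev by simp
  next
    case 2 thus False using even_period2_no_extreme_pair[OF ev 2 mf] c by blast
  next
    case 3
    then obtain g where "periodic g" "same_class g f" "weight g = weight f"
      "n_extreme_pairs g < n_extreme_pairs f"
      using even_extreme_chain[OF ev 3 mf] c by blast
    thus False using lex_min_le[OF f] n_extreme_pairs_nonneg[of g] by fastforce
  qed
qed

definition admissible_pair :: "int \<Rightarrow> int \<Rightarrow> bool" where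
  "admissible_pair x y \<longleftrightarrow> (x = r \<longrightarrow> 0 \<le> y \<and> y < r) \<and> (x = - r \<longrightarrow> - r < y \<and> y \<le> 0)"

definition reduced :: "(int \<Rightarrow> int) \<Rightarrow> bool" where
  "reduced f \<longleftrightarrow> periodic f \<and> (\<forall>p. \<bar>f p\<bar> \<le> r) \<and>
     (k = 2*r \<longrightarrow> (\<forall>p. admissible_pair (f p) (f (p+1))))"

lemma admissible_pair_uminus: "admissible_pair (- x) (- y) \<longleftrightarrow> admissible_pair x y"
  unfolding admissible_pair_def by auto

lemma even_reduced_in_class:
  assumes ev: "k = 2*r" and py: "periodic y"
  shows "\<exists>f. reduced f \<and> same_class f y \<and> weight f \<le> weight y"
proof -
  obtain f where f: "lex_min (\<lambda>f. nat (n_extreme_pairs f)) f" and fy: "same_class f y"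
    using exists_lex_min[OF py] by blast
  have mf: "weight_min f" by (rule lex_min_weight_min[OF f])
  have pf: "periodic f" using mf weight_min_def by blast
  have "n_extreme_pairs (\<lambda>p. - g p) = n_extreme_pairs g" for g
    unfolding n_extreme_pairs_def extreme_pair_def by (rule sum.cong) auto
  hence f': "lex_min (\<lambda>f. nat (n_extreme_pairs f)) (\<lambda>p. - f p)" using lex_min_uminus[OF f] by simp
  have bnd: "\<bar>f p\<bar> \<le> r" for p using weight_min_le[OF mf, of p] weight_min_ge[OF mf, of p] ev by simp
  have "0 \<le> f (p+1) \<and> f (p+1) < r" if "f p = r" for p
  proof -
    have "m \<ge> 2" using weight_min_period1[OF mf, of p] that ev m_pos by (cases "m = 1") auto
    thus ?thesis using weight_min_max_next[OF mf, of p] even_lex_min_no_extreme_pair[OF ev f, of p]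
        bnd[of "p+1"] that ev by auto
  qed
  moreover have "- r < f (p+1) \<and> f (p+1) \<le> 0" if "f p = - r" for p
  proof -
    have "m \<ge> 2" using weight_min_period1[OF mf, of p] that ev m_pos by (cases "m = 1") auto
    thus ?thesis using weight_min_min_next[OF mf, of p] even_lex_min_no_extreme_pair[OF ev f', of p]
        bnd[of "p+1"] that ev by auto
  qed
  ultimately have "reduced f" unfolding reduced_def admissible_pair_def using pf bnd by blast
  moreover have "weight f \<le> weight y" using mf py fy same_class_sym unfolding weight_min_def
    by blast
  ultimately show ?thesis using fy by blast
qed

lemma reduced_in_class:
  assumes py: "periodic y"
  shows "\<exists>f. reduced f \<and> same_class f y \<and> weight f \<le> weight y"
proof (cases "k = 2*r")
  case True thus ?thesis using even_reduced_in_class py by blast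
next
  case False
  then obtain f where "periodic f" "same_class f y" "\<forall>p. \<bar>f p\<bar> \<le> r" "weight f \<le> weight y"
    using odd_bounded_in_class py k_cases by blast
  moreover have "reduced f" unfolding reduced_def using calculation False by blast
  ultimately show ?thesis by blast
qed

lemma sum_lessThan_split: "n \<le> m \<Longrightarrow> (\<Sum>j<m. g j) = (\<Sum>j<n. g j) + (\<Sum>j\<in>{n..<m}. g j)"
  for g :: "nat \<Rightarrow> int"
  by (simp add: atLeast0LessThan[symmetric] sum.atLeastLessThan_concat)

lemma value_prefix_dvd:
  assumes "value_of d = modulus * q" "n \<le> m"
  shows "k^n dvd (q + (\<Sum>j<n. k^j * d (int j)))"
proof -
  have "value_of d = (\<Sum>j<n. k^j * d (int j)) + (\<Sum>j\<in>{n..<m}. k^j * d (int j))"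
    unfolding value_of_def by (rule sum_lessThan_split[OF assms(2)])
  hence "q + (\<Sum>j<n. k^j * d (int j)) = q * k^m - (\<Sum>j\<in>{n..<m}. k^j * d (int j))"
    using assms(1) by (simp add: modulus_def algebra_simps)
  moreover have "k^n dvd q * k^m" using assms(2) by (simp add: le_imp_power_dvd)
  moreover have "k^n dvd (\<Sum>j\<in>{n..<m}. k^j * d (int j))"
    by (rule dvd_sum) (auto simp: le_imp_power_dvd)
  ultimately show ?thesis by simp
qed

lemma nat_pred_mod:
  "nat ((p - 1) mod int m) = (if p mod int m = 0 then m - 1 else nat (p mod int m) - 1)"
proof -
  have b: "0 \<le> p mod int m" "p mod int m < int m" using int_m_pos by simp_all
  have "(p - 1) mod int m = (p mod int m - 1) mod int m" by (rule mod_diff_left_eq[symmetric])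
  moreover have "(0 - 1) mod int m = int m - 1" using m_pos by (simp add: zmod_minus1)
  moreover have "0 < p mod int m \<Longrightarrow> (p mod int m - 1) mod int m = p mod int m - 1"
    using b by (intro mod_pos_pos_trivial) auto
  ultimately show ?thesis using b by (auto simp: nat_diff_distrib)
qed

text \<open>For \<open>d = f - g\<close> with \<open>f\<close>, \<open>g\<close> in the same class, \<open>C p\<close> is the carry out of position
  \<open>p\<close> in the cyclic base-\<open>k\<close> subtraction of \<open>g\<close> from \<open>f\<close>.\<close>

lemma exists_carries:
  assumes pd: "periodic d" and vd: "value_of d = modulus * q"
  shows "\<exists>C. periodic C \<and> (\<forall>p. k * C p = d p + C (p - 1))"
proof -
  define S where "S n = (\<Sum>j<n. k^j * d (int j))" for n
  define cc where "cc n = (q + S (n+1)) div k^(n+1)" for n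
  have kne: "k \<noteq> 0" using k_ge2 by simp
  have cc_eq: "k^(n+1) * cc n = q + S (n+1)" if "n < m" for n
    using value_prefix_dvd[OF vd, of "n+1"] that unfolding cc_def S_def by simp
  have rel: "k * cc n = d (int n) + cc (n - 1)" if "n < m" "n \<ge> 1" for n
  proof -
    have "S (n+1) = S n + k^n * d (int n)" by (simp add: S_def)
    hence "k^n * (k * cc n) = k^n * (d (int n) + cc (n-1))"
      using cc_eq[of n] cc_eq[of "n-1"] that by (simp add: algebra_simps)
    thus ?thesis using kne by simp
  qed
  have rel0: "k * cc 0 = d 0 + cc (m - 1)"
  proof -
    have "k^m * cc (m-1) = k^m * q" using cc_eq[of "m-1"] m_pos vd
      by (simp add: S_def value_of_def modulus_def algebra_simps)
    thus ?thesis using cc_eq[of 0] m_pos kne by (simp add: S_def)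
  qed
  define C where "C p = cc (nat (p mod int m))" for p
  have "k * C p = d p + C (p - 1)" for p
  proof (cases "p mod int m = 0")
    case True
    thus ?thesis using rel0 periodic_mod[OF pd, of p] unfolding C_def nat_pred_mod by simp
  next
    case False
    hence "nat (p mod int m) \<ge> 1" using int_m_pos pos_mod_sign[of "int m" p] by linarith
    thus ?thesis using rel[OF nat_mod_m_less] False periodic_nat_mod[OF pd, of p]
      unfolding C_def nat_pred_mod by simp
  qed
  moreover have "periodic C" unfolding periodic_def C_def by simp
  ultimately show ?thesis by blast
qed

text \<open>The reduced sequences whose class contains a second reduced sequence (the two differ by
  \<open>k - 1\<close> everywhere); \<open>calA\<close> omits the words of one of them.\<close>

definition exceptional_pos :: "(int \<Rightarrow> int) \<Rightarrow> bool" where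
  "exceptional_pos f \<longleftrightarrow> periodic f \<and> (if k = 2*r then (\<forall>p. f p = r \<or> f p = r - 1)
        \<and> (\<forall>p. f p + f (p+1) = 2*r - 1)
                     else (\<forall>p. f p = r))"
definition exceptional_neg :: "(int \<Rightarrow> int) \<Rightarrow> bool" where
  "exceptional_neg f \<longleftrightarrow> periodic f \<and> (if k = 2*r then (\<forall>p. f p = - r \<or> f p = 1 - r)
        \<and> (\<forall>p. f p + f (p+1) = 1 - 2*r)
                     else (\<forall>p. f p = - r))"

lemma exceptional_neg_uminus: "exceptional_neg (\<lambda>p. - f p) \<longleftrightarrow> exceptional_pos f"
proof -
  have a: "periodic (\<lambda>p. - f p) \<longleftrightarrow> periodic f"
    using periodic_uminus[of f] periodic_uminus[of "\<lambda>p. - f p"] by auto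
  have b: "(\<forall>p. - f p = - r \<or> - f p = 1 - r) \<longleftrightarrow> (\<forall>p. f p = r \<or> f p = r - 1)" by auto
  have c: "(\<forall>p. - f p + - f (p+1) = 1 - 2*r) \<longleftrightarrow> (\<forall>p. f p + f (p+1) = 2*r - 1)"
    by (intro iff_allI) auto
  have d: "(\<forall>p. - f p = - r) \<longleftrightarrow> (\<forall>p. f p = r)" by auto
  show ?thesis unfolding exceptional_neg_def exceptional_pos_def a b c d ..
qed

lemma reduced_bound: "reduced f \<Longrightarrow> \<bar>f p\<bar> \<le> r" unfolding reduced_def by blast
lemma reduced_periodic: "reduced f \<Longrightarrow> periodic f" unfolding reduced_def by blast
lemma reduced_even_top: "reduced f \<Longrightarrow> k = 2*r \<Longrightarrow> f p = r \<Longrightarrow> 0 \<le> f (p+1) \<and> f (p+1) < r"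
  unfolding reduced_def admissible_pair_def by blast
lemma reduced_even_bot: "reduced f \<Longrightarrow> k = 2*r \<Longrightarrow> f p = - r \<Longrightarrow> - r < f (p+1) \<and> f (p+1) \<le> 0"
  unfolding reduced_def admissible_pair_def by blast

lemma reduced_uminus: "reduced f \<Longrightarrow> reduced (\<lambda>p. - f p)"
  unfolding reduced_def using periodic_uminus admissible_pair_uminus by simp

lemma carries_le_1:
  assumes sf: "reduced f" and sg: "reduced g" and pC: "periodic C"
    and rel: "\<forall>p. k * C p = (f p - g p) + C (p - 1)"
  shows "C p \<le> 1"
proof -
  define A where "A = C ` int ` {..<m}"
  have finA: "finite A" "A \<noteq> {}" using m_pos unfolding A_def by (auto simp: lessThan_empty_iff)
  define Cm where "Cm = Max A"
  have up: "C q \<le> Cm" for q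
  proof -
    have "C q = C (int (nat (q mod int m)))" using periodic_nat_mod[OF pC] by simp
    moreover have "C (int (nat (q mod int m))) \<in> A" unfolding A_def using nat_mod_m_less by blast
    ultimately show ?thesis unfolding Cm_def using finA by simp
  qed
  have "Cm \<in> C ` int ` {..<m}" using Max_in[OF finA] unfolding Cm_def A_def by simp
  then obtain i where "Cm = C (int i)" by auto
  then obtain p0 where p0: "C p0 = Cm" by metis
  have dle: "f q - g q \<le> 2*r" for q using reduced_bound[OF sf, of q] reduced_bound[OF sg, of q]
    by simp
  have "Cm \<le> 1"
  proof (rule ccontr)
    assume c: "\<not> Cm \<le> 1"
    have e1: "k * Cm \<le> 2*r + Cm" using rel[rule_format, of p0] p0 up[of "p0-1"] dle[of p0] by simp
    have "2*r \<le> k" using k_cases by auto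
    hence e2: "(k - 1) * Cm \<le> k" using e1 by (simp add: algebra_simps)
    have "(k-1) * 2 \<le> (k-1) * Cm" using c k_ge2 by (intro mult_left_mono) auto
    hence k2': "k = 2" using e2 k_ge2 by simp
    hence r1: "r = 1" "k = 2*r" using k_cases by auto
    have Cm2: "Cm = 2" using e2 c k2' by simp
    have d0: "f p0 - g p0 = 2" using rel[rule_format, of p0] p0 Cm2 k2' up[of "p0-1"] dle[of p0] r1
      by simp
    have c1: "C (p0 - 1) = 2" using rel[rule_format, of p0] p0 Cm2 k2' d0 by simp
    have "f (p0-1) - g (p0-1) = 2"
      using rel[rule_format, of "p0-1"] c1 Cm2 k2' up[of "p0-1-1"] dle[of "p0-1"] r1 by simp
    hence "f (p0-1) = r" "f p0 = r"
      using d0 reduced_bound[OF sf, of "p0-1"] reduced_bound[OF sg, of "p0-1"]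
        reduced_bound[OF sf, of p0] reduced_bound[OF sg, of p0] r1 by auto
    thus False using reduced_even_top[OF sf r1(2), of "p0-1"] by simp
  qed
  thus ?thesis using up[of p] by simp
qed

lemma carries_ge_neg1:
  assumes sf: "reduced f" and sg: "reduced g" and pC: "periodic C"
    and rel: "\<forall>p. k * C p = (f p - g p) + C (p - 1)"
  shows "C p \<ge> - 1"
proof -
  have "periodic (\<lambda>p. - C p)" using periodic_uminus[OF pC] .
  moreover have "\<forall>p. k * (- C p) = (g p - f p) + (- C (p - 1))" using rel
    by (simp add: algebra_simps)
  ultimately have "- C p \<le> 1" using carries_le_1[OF sg sf] by blast
  thus ?thesis by simp
qed

lemma carries_one_prev:
  assumes sf: "reduced f" and sg: "reduced g" and pC: "periodic C"
    and rel: "\<forall>p. k * C p = (f p - g p) + C (p - 1)"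
    and c: "C p = 1"
  shows "C (p - 1) = 1"
proof -
  have dle: "f q - g q \<le> 2*r" "f q - g q \<ge> - 2*r" for q
    using reduced_bound[OF sf, of q] reduced_bound[OF sg, of q] by auto
  have lo: "C (p-1) \<le> 1" using carries_le_1[OF assms(1-4)] by blast
  have e: "C (p-1) = k - (f p - g p)" using rel[rule_format, of p] c by simp
  have "C (p-1) \<ge> 0" using e dle[of p] k_cases by auto
  moreover have "C (p-1) \<noteq> 0"
  proof
    assume z: "C (p-1) = 0"
    hence dk: "f p - g p = k" using e by simp
    have ev: "k = 2*r" using dk dle[of p] k_cases by auto
    have "f p = r" "g p = - r" using dk ev reduced_bound[OF sf, of p] reduced_bound[OF sg, of p]
      by auto
    hence a: "0 \<le> f (p+1) \<and> f (p+1) < r" "- r < g (p+1) \<and> g (p+1) \<le> 0"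
      using reduced_even_top[OF sf ev] reduced_even_bot[OF sg ev] by auto
    have rr: "k * C (p+1) = (f (p+1) - g (p+1)) + 1" using rel[rule_format, of "p+1"] c by simp
    have "C (p+1) \<le> 1" "C (p+1) \<ge> -1"
      using carries_le_1[OF assms(1-4)] carries_ge_neg1[OF assms(1-4)] by blast+
    hence "C (p+1) = -1 \<or> C (p+1) = 0 \<or> C (p+1) = 1" by auto
    thus False using rr a ev by auto
  qed
  ultimately show ?thesis using lo by simp
qed

lemma carries_one_all:
  assumes sf: "reduced f" and sg: "reduced g" and pC: "periodic C"
    and rel: "\<forall>p. k * C p = (f p - g p) + C (p - 1)"
    and c: "C p0 = 1"
  shows "C p = 1"
proof -
  have A: "C (p0 - int n) = 1" for n
  proof (induction n)
    case 0 thus ?case using c by simp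
  next
    case (Suc n)
    have "C (p0 - int n - 1) = 1" using carries_one_prev[OF assms(1-4) Suc.IH] .
    thus ?case by (simp add: algebra_simps)
  qed
  define n where "n = nat ((p0 - p) mod int m)"
  have "int n = (p0 - p) mod int m" using int_m_pos by (simp add: n_def)
  hence "(p0 - int n) mod int m = (p0 - (p0 - p) mod int m) mod int m" by simp
  also have "\<dots> = (p0 - (p0 - p)) mod int m" by (rule mod_diff_right_eq)
  finally have "(p0 - int n) mod int m = p mod int m" by simp
  hence "C p = C (p0 - int n)" using periodic_cong[OF pC, of "p0 - int n" p] by simp
  thus ?thesis using A by simp
qed

lemma exceptional_of_constant_difference:
  assumes sf: "reduced f" and sg: "reduced g" and d: "\<forall>p. f p - g p = k - 1"
  shows "exceptional_pos f \<and> exceptional_neg g"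
proof (cases "k = 2*r")
  case False
  hence od: "k = 2*r+1" using k_cases by simp
  have "f p = r \<and> g p = - r" for p
    using d[rule_format, of p] od reduced_bound[OF sf, of p] reduced_bound[OF sg, of p]
      by (simp add: abs_le_iff)
  hence "\<forall>p. f p = r" "\<forall>p. g p = - r" by auto
  thus ?thesis unfolding exceptional_pos_def exceptional_neg_def
    using False reduced_periodic[OF sf] reduced_periodic[OF sg] by simp
next
  case ev: True
  have cs: "(f p = r \<and> g p = 1 - r) \<or> (f p = r - 1 \<and> g p = - r)" for p
    using d[rule_format, of p] ev reduced_bound[OF sf, of p] reduced_bound[OF sg, of p] by auto
  have sm: "f p + f (p+1) = 2*r - 1" for p
  proof (cases "f p = r")
    case True
    hence "0 \<le> f (p+1) \<and> f (p+1) < r" using reduced_even_top[OF sf ev] by blast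
    thus ?thesis using cs[of "p+1"] True by auto
  next
    case False
    hence "g p = - r" "f p = r - 1" using cs[of p] by auto
    hence "- r < g (p+1) \<and> g (p+1) \<le> 0" using reduced_even_bot[OF sg ev] by blast
    thus ?thesis using cs[of "p+1"] \<open>f p = r - 1\<close> by auto
  qed
  have sg': "g p + g (p+1) = 1 - 2*r" for p
    using sm[of p] d[rule_format, of p] d[rule_format, of "p+1"] ev by simp
  show ?thesis unfolding exceptional_pos_def exceptional_neg_def
    using ev reduced_periodic[OF sf] reduced_periodic[OF sg] cs sm sg' by auto
qed

lemma reduced_same_class_cases:
  assumes sf: "reduced f" and sg: "reduced g" and c: "same_class f g"
  shows "f = g \<or> (exceptional_pos f \<and> exceptional_neg g \<and> (\<forall>p. f p - g p = k - 1))
      \<or> (exceptional_neg f \<and> exceptional_pos g \<and> (\<forall>p. g p - f p = k - 1))"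
proof -
  define d where "d p = f p - g p" for p
  have pd: "periodic d" using reduced_periodic[OF sf] reduced_periodic[OF sg]
    unfolding periodic_def d_def by metis
  obtain q where "value_of f - value_of g = modulus * q" using c unfolding same_class_def
    by (elim dvdE)
  hence "value_of d = modulus * q" unfolding d_def value_of_def
    by (simp add: algebra_simps sum_subtractf)
  then obtain C where pC: "periodic C" and rel: "\<forall>p. k * C p = (f p - g p) + C (p - 1)"
    using exists_carries[OF pd] unfolding d_def by blast
  have "C p = 1 \<or> C p = -1" if "C p \<noteq> 0" for p
    using carries_le_1[OF sf sg pC rel, of p] carries_ge_neg1[OF sf sg pC rel, of p] that
    by linarith
  then consider (one) p0 where "C p0 = 1" | (minus_one) p0 where "C p0 = -1" | (zero) "\<forall>p. C p = 0"
    by blast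
  thus ?thesis
  proof cases
    case one
    hence "C p = 1" for p using carries_one_all[OF sf sg pC rel] by blast
    hence "f p - g p = k - 1" for p using rel[rule_format, of p] by simp
    thus ?thesis using exceptional_of_constant_difference[OF sf sg] by blast
  next
    case minus_one
    have rel': "\<forall>p. k * (- C p) = (g p - f p) + (- C (p - 1))"
      using rel by (simp add: algebra_simps)
    have "- C p = 1" for p
      using carries_one_all[OF sg sf periodic_uminus[OF pC] rel', of p0] minus_one by simp
    hence "g p - f p = k - 1" for p using rel'[rule_format, of p] by simp
    thus ?thesis using exceptional_of_constant_difference[OF sg sf] by blast
  next
    case zero
    thus ?thesis using rel by auto
  qed
qed

lemma exceptional_partner_weight:
  assumes "exceptional_pos f" "\<forall>p. f p - g p = k - 1" "periodic g"
  shows "weight g = weight f"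
proof (cases "k = 2*r")
  case True
  have pf: "periodic f" using assms(1) exceptional_pos_def by blast
  have "\<forall>p. f p + f (p+1) = 2*r - 1" using assms(1) True unfolding exceptional_pos_def by simp
  hence gf: "g p = - f (p+1)" for p
  proof -
    assume h: "\<forall>p. f p + f (p+1) = 2*r - 1"
    have "f p + f (p+1) = 2*r - 1" using h by blast
    moreover have "f p - g p = k - 1" using assms(2) by blast
    ultimately show ?thesis using True by linarith
  qed
  have "weight g = (\<Sum>i<m. \<bar>f (int i + 1)\<bar>)" unfolding weight_def gf by simp
  also have "\<dots> = weight f" unfolding weight_def
    by (rule sum_shift_periodic) (use periodic_add_m[OF pf] in auto)
  finally show ?thesis .
next
  case False
  hence "\<forall>p. f p = r" using assms(1) unfolding exceptional_pos_def by simp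
  hence "\<forall>p. g p = - r" using assms(2) False k_cases by auto
  thus ?thesis using \<open>\<forall>p. f p = r\<close> by (simp add: weight_def)
qed

lemma reduced_weight_le:
  assumes sf: "reduced f" and pz: "periodic z" and c: "same_class z f"
  shows "weight f \<le> weight z"
proof -
  obtain g where g: "reduced g" "same_class g z" "weight g \<le> weight z" using reduced_in_class[OF pz]
    by blast
  have "same_class g f" using same_class_trans[OF g(2) c] .
  from reduced_same_class_cases[OF g(1) sf this] have "weight g = weight f"
  proof (elim disjE conjE)
    assume "g = f" thus ?thesis by simp
  next
    assume "exceptional_pos g" "exceptional_neg f" "\<forall>p. g p - f p = k - 1" thus ?thesis
      using exceptional_partner_weight reduced_periodic[OF sf] by metis
  next
    assume "exceptional_neg g" "exceptional_pos f" "\<forall>p. f p - g p = k - 1" thus ?thesis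
      using exceptional_partner_weight reduced_periodic[OF g(1)] by metis
  qed
  thus ?thesis using g(3) by simp
qed

lemma not_exceptional_pos_and_neg: "\<not> (exceptional_pos f \<and> exceptional_neg f)"
proof
  assume a: "exceptional_pos f \<and> exceptional_neg f"
  show False
  proof (cases "k = 2*r")
    case True
    have "\<forall>p. f p + f (p+1) = 2*r - 1" using a True unfolding exceptional_pos_def by simp
    moreover have "\<forall>p. f p + f (p+1) = 1 - 2*r" using a True unfolding exceptional_neg_def by simp
    ultimately have "2*r - 1 = 1 - 2*r" by metis
    thus False by presburger
  next
    case False
    hence "f 0 = r" "f 0 = - r" using a unfolding exceptional_pos_def exceptional_neg_def by auto
    thus False using r_ge1 by simp
  qed
qed

lemma exceptional_pos_partner:
  assumes pf: "exceptional_pos f" and sf: "reduced f"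
  shows "\<exists>g. reduced g \<and> exceptional_neg g \<and> same_class g f \<and> weight g = weight f"
proof -
  define g where "g p = f p - (k - 1)" for p
  have perf: "periodic f" using reduced_periodic[OF sf] .
  have pg: "periodic g" using perf unfolding periodic_def g_def by metis
  have d: "\<forall>p. f p - g p = k - 1" unfolding g_def by simp
  have wg: "weight g = weight f" by (rule exceptional_partner_weight[OF pf d pg])
  have "value_of f - value_of g = (\<Sum>i<m. k^i * f (int i) - k^i * (f (int i) - (k - 1)))"
    unfolding value_of_def g_def by (simp add: sum_subtractf)
  also have "\<dots> = (\<Sum>i<m. k^i * (k - 1))" by (simp add: algebra_simps)
  also have "\<dots> = (\<Sum>i<m. k^i) * (k - 1)" by (simp add: sum_distrib_right)
  finally have "value_of f - value_of g = (\<Sum>i<m. k^i) * (k - 1)" .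
  hence "value_of f - value_of g = modulus" using power_diff_1_eq[of k m]
    by (simp add: modulus_def mult.commute)
  hence "value_of g - value_of f = - modulus" by simp
  hence cg: "same_class g f" unfolding same_class_def by simp
  have SP: "reduced g \<and> exceptional_neg g"
  proof (cases "k = 2*r")
    case ev: True
    have vals: "\<forall>p. f p = r \<or> f p = r - 1" and sm: "\<forall>p. f p + f (p+1) = 2*r - 1"
      using pf ev unfolding exceptional_pos_def by auto
    have gv: "g p = 1 - r \<or> g p = - r" for p using vals ev unfolding g_def by auto
    have gs: "g p + g (p+1) = 1 - 2*r" for p using sm[rule_format, of p] ev unfolding g_def by simp
    have "\<bar>g p\<bar> \<le> r" for p using gv[of p] r_ge1 by auto
    moreover have "admissible_pair (g p) (g (p+1))" for p
    proof (cases "g p = - r")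
      case True thus ?thesis using gs[of p] r_ge1 unfolding admissible_pair_def by auto
    next
      case False thus ?thesis using gv[of p] r_ge1 unfolding admissible_pair_def by auto
    qed
    ultimately have "reduced g" unfolding reduced_def using pg by blast
    moreover have "exceptional_neg g" unfolding exceptional_neg_def using pg ev gv gs by auto
    ultimately show ?thesis by blast
  next
    case od: False
    hence "\<forall>p. f p = r" using pf unfolding exceptional_pos_def by simp
    hence gv: "\<forall>p. g p = - r" using od k_cases unfolding g_def by auto
    have "reduced g" unfolding reduced_def using pg gv od r_ge1 by simp
    moreover have "exceptional_neg g" unfolding exceptional_neg_def using pg od gv by simp
    ultimately show ?thesis by blast
  qed
  show ?thesis using SP cg wg by blast
qed

lemma exceptional_neg_partner:
  assumes pf: "exceptional_neg f" and sf: "reduced f"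
  shows "\<exists>g. reduced g \<and> exceptional_pos g \<and> same_class g f \<and> weight g = weight f"
proof -
  have "exceptional_pos (\<lambda>p. - f p)" using exceptional_neg_uminus[of "\<lambda>p. - f p"] pf by simp
  moreover have "reduced (\<lambda>p. - f p)" using reduced_uminus[OF sf] .
  ultimately obtain g where g: "reduced g" "exceptional_neg g" "same_class g (\<lambda>p. - f p)"
    "weight g = weight (\<lambda>p. - f p)"
    using exceptional_pos_partner by blast
  have "reduced (\<lambda>p. - g p)" using reduced_uminus[OF g(1)] .
  moreover have "exceptional_pos (\<lambda>p. - g p)" using exceptional_neg_uminus[of "\<lambda>p. - g p"] g(2)
    by simp
  moreover have "same_class (\<lambda>p. - g p) f" using same_class_uminus[OF g(3)] by simp
  moreover have "weight (\<lambda>p. - g p) = weight f" using g(4) by (simp add: weight_uminus)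
  ultimately show ?thesis by blast
qed

lemma reduced_in_class_avoiding:
  assumes X: "X = exceptional_pos \<or> X = exceptional_neg" and py: "periodic y"
  shows "\<exists>f. reduced f \<and> \<not> X f \<and> same_class f y \<and> weight f \<le> weight y"
proof -
  obtain f where f: "reduced f" "same_class f y" "weight f \<le> weight y" using reduced_in_class[OF py]
    by blast
  show ?thesis
  proof (cases "X f")
    case False thus ?thesis using f by blast
  next
    case True
    show ?thesis
    proof (cases "X = exceptional_pos")
      case True
      hence "exceptional_pos f" using \<open>X f\<close> by simp
      then obtain g where "reduced g" "exceptional_neg g" "same_class g f" "weight g = weight f"
        using exceptional_pos_partner f(1) by blast
      moreover have "\<not> X g" using True not_exceptional_pos_and_neg calculation(2) by blast
      ultimately show ?thesis using f same_class_trans by metis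
    next
      case False
      hence XP: "X = exceptional_neg" using X by simp
      hence "exceptional_neg f" using \<open>X f\<close> by simp
      then obtain g where "reduced g" "exceptional_pos g" "same_class g f" "weight g = weight f"
        using exceptional_neg_partner f(1) by blast
      moreover have "\<not> X g" using XP not_exceptional_pos_and_neg calculation(2) by blast
      ultimately show ?thesis using f same_class_trans by metis
    qed
  qed
qed

lemma reduced_unique:
  assumes X: "X = exceptional_pos \<or> X = exceptional_neg" and sf: "reduced f" "\<not> X f"
    and sg: "reduced g" "\<not> X g" and c: "same_class f g"
  shows "f = g"
  using reduced_same_class_cases[OF sf(1) sg(1) c] X sf(2) sg(2) by auto

definition cyc :: "int list \<Rightarrow> int \<Rightarrow> int" where "cyc xs = (\<lambda>p. xs ! nat (p mod int m))"

lemma periodic_cyc: "periodic (cyc xs)" unfolding periodic_def cyc_def by simp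
lemma cyc_nth: "i < m \<Longrightarrow> cyc xs (int i) = xs ! i" unfolding cyc_def by simp

lemma value_of_cyc: "length xs = m \<Longrightarrow> value_of (cyc xs) = digit_value k xs"
  unfolding value_of_def digit_value_sum by (simp add: cyc_nth)
lemma weight_cyc: "length xs = m \<Longrightarrow> weight (cyc xs) = digit_weight xs"
  unfolding weight_def digit_weight_sum by (simp add: cyc_nth)
lemma cyc_inj: "length xs = m \<Longrightarrow> length ys = m \<Longrightarrow> cyc xs = cyc ys \<Longrightarrow> xs = ys"
  by (metis cyc_nth nth_equalityI)

lemma cyc_of_periodic: "periodic f \<Longrightarrow> cyc (map (\<lambda>i. f (int i)) [0..<m]) = f"
  by (rule periodic_eqI[OF periodic_cyc]) (auto simp: cyc_nth)

lemma cyc_rotate: "length xs = m \<Longrightarrow> cyc (rotate n xs) = (\<lambda>p. cyc xs (p + int n))"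
proof
  fix p assume l: "length xs = m"
  have a: "nat (p mod int m) < m" by (rule nat_mod_m_less)
  have "cyc (rotate n xs) p = xs ! ((n + nat (p mod int m)) mod m)"
    unfolding cyc_def using nth_rotate[of "nat (p mod int m)" xs n] a l by simp
  moreover have "nat ((p + int n) mod int m) = (n + nat (p mod int m)) mod m"
  proof -
    have "(p + int n) mod int m = (p mod int m + int n) mod int m" by (simp add: mod_add_left_eq)
    also have "\<dots> = int ((nat (p mod int m) + n) mod m)" using int_m_pos by (simp add: zmod_int)
    finally show ?thesis by (simp add: add.commute)
  qed
  ultimately show "cyc (rotate n xs) p = cyc xs (p + int n)" unfolding cyc_def by simp
qed

lemma reduced_shift:
  assumes "reduced f"
  shows "reduced (\<lambda>p. f (p + c))"
proof -
  have "admissible_pair (f (p + c)) (f (p + 1 + c))" if "k = 2*r" for p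
    using assms that unfolding reduced_def by (metis add.commute add.left_commute)
  thus ?thesis using assms periodic_shift unfolding reduced_def by auto
qed

lemma exceptional_pos_shift:
  assumes P: "exceptional_pos f" shows "exceptional_pos (\<lambda>p. f (p + c))"
proof -
  have a: "periodic (\<lambda>p. f (p + c))" using periodic_shift P unfolding exceptional_pos_def by blast
  show ?thesis
  proof (cases "k = 2*r")
    case True
    have v: "\<forall>p. f p = r \<or> f p = r - 1" and sm: "\<forall>p. f p + f (p+1) = 2*r - 1" using P True
      unfolding exceptional_pos_def by auto
    have "\<forall>p. f (p + c) + f (p + 1 + c) = 2*r - 1"
    proof
      fix p show "f (p + c) + f (p + 1 + c) = 2*r - 1" using sm[rule_format, of "p + c"]
        by (simp add: ac_simps)
    qed
    thus ?thesis unfolding exceptional_pos_def using a v True by auto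
  next
    case False thus ?thesis using P a unfolding exceptional_pos_def by auto
  qed
qed

lemma exceptional_neg_shift:
  assumes P: "exceptional_neg f" shows "exceptional_neg (\<lambda>p. f (p + c))"
proof -
  have "exceptional_pos (\<lambda>p. - f p)" using exceptional_neg_uminus[of "\<lambda>p. - f p"] P by simp
  hence h: "exceptional_pos (\<lambda>p. (\<lambda>p. - f p) (p + c))" by (rule exceptional_pos_shift)
  show ?thesis using exceptional_neg_uminus[of "\<lambda>p. - f (p + c)"] h by simp
qed

lemma exceptional_shift_iff:
  assumes "X = exceptional_pos \<or> X = exceptional_neg"
  shows "X (\<lambda>p. f (p + c)) \<longleftrightarrow> X f"
proof
  assume "X (\<lambda>p. f (p + c))"
  hence "X (\<lambda>p. (\<lambda>p. f (p + c)) (p + - c))" using assms exceptional_pos_shift exceptional_neg_shift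
    by blast
  thus "X f" by simp
qed (use assms exceptional_pos_shift exceptional_neg_shift in blast)

lemma modulus_dvd_rotate: "length xs = m
    \<Longrightarrow> modulus dvd (digit_value k xs - k^n * digit_value k (rotate n xs))"
proof (induction n)
  case 0 thus ?case by simp
next
  case (Suc n)
  define ys where "ys = rotate n xs"
  have ly: "length ys = m" "ys \<noteq> []" using Suc.prems m_pos by (auto simp: ys_def)
  have e: "k * digit_value k (rotate1 ys) = digit_value k ys + modulus * hd ys"
    using digit_value_rotate1[OF ly(2), of k] ly(1) by (simp add: modulus_def)
  have r1: "rotate (Suc n) xs = rotate1 ys" unfolding ys_def by simp
  have "k^Suc n * digit_value k (rotate1 ys) = k^n * (k * digit_value k (rotate1 ys))"
    by (simp add: algebra_simps)
  also have "\<dots> = k^n * digit_value k ys + modulus * (k^n * hd ys)" using e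
    by (simp add: algebra_simps)
  finally have E: "digit_value k xs - k^Suc n * digit_value k (rotate (Suc n) xs)
      = (digit_value k xs - k^n * digit_value k ys) - modulus * (k^n * hd ys)"
    using r1 by simp
  have D: "modulus dvd (digit_value k xs - k^n * digit_value k ys) - modulus * (k^n * hd ys)"
    by (rule dvd_diff[OF Suc.IH[OF Suc.prems, unfolded ys_def[symmetric]] dvd_triv_left])
  show ?case unfolding E by (rule D)
qed

lemma modulus_dvd_pow_mult: "modulus dvd (k^(m*t) - 1)"
  using power_diff_1_eq[of "k^m" t] unfolding modulus_def power_mult by simp

lemma modulus_dvd_pow_rotate:
  assumes l: "length xs = m"
  shows "modulus dvd (k^j * digit_value k xs - digit_value k (rotate ((m-1)*j) xs))"
proof -
  define n where "n = (m-1)*j"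
  have "modulus dvd k^j * (digit_value k xs - k^n * digit_value k (rotate n xs))"
    using modulus_dvd_rotate[OF l] by simp
  moreover have "modulus dvd (k^(m*j) - 1) * digit_value k (rotate n xs)" using modulus_dvd_pow_mult
    by simp
  moreover have "j + n = m * j" using m_pos unfolding n_def by (cases m) auto
  ultimately have "modulus dvd k^j * (digit_value k xs - k^n * digit_value k (rotate n xs))
      + (k^(m*j) - 1) * digit_value k (rotate n xs)"
    by simp
  moreover have "k^j * (digit_value k xs - k^n * digit_value k (rotate n xs))
      + (k^(m*j) - 1) * digit_value k (rotate n xs)
      = k^j * digit_value k xs - digit_value k (rotate n xs)"
    using \<open>j + n = m * j\<close> by (simp add: algebra_simps power_add[symmetric])
  ultimately show ?thesis unfolding n_def by simp
qed

lemma reduced_digits_unique: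
  assumes X: "X = exceptional_pos \<or> X = exceptional_neg" and lx: "length xs = m"
    and ly: "length ys = m"
    and sx: "reduced (cyc xs)" "\<not> X (cyc xs)" and sy: "reduced (cyc ys)" "\<not> X (cyc ys)"
    and c: "modulus dvd (digit_value k ys - k^j * digit_value k xs)"
  shows "\<exists>n. ys = rotate n xs"
proof -
  define zs where "zs = rotate ((m-1)*j) xs"
  have lz: "length zs = m" using lx zs_def by simp
  have Fz: "cyc zs = (\<lambda>p. cyc xs (p + int ((m-1)*j)))" using cyc_rotate[OF lx] zs_def by simp
  have sz: "reduced (cyc zs)" "\<not> X (cyc zs)"
    using reduced_shift[OF sx(1)] exceptional_shift_iff[OF X, of "cyc xs" "int ((m-1)*j)"] sx(2)
    unfolding Fz by auto
  have "modulus dvd (digit_value k ys - digit_value k zs)"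
    using dvd_add[OF c modulus_dvd_pow_rotate[OF lx, of j]] unfolding zs_def by simp
  hence "same_class (cyc ys) (cyc zs)" unfolding same_class_def
    using value_of_cyc[OF ly] value_of_cyc[OF lz] by simp
  hence "cyc ys = cyc zs" by (rule reduced_unique[where f = "cyc ys" and g = "cyc zs", OF X sy sz])
  hence "ys = zs" using cyc_inj[OF ly lz] by simp
  thus ?thesis unfolding zs_def by blast
qed

lemma reduced_digits_weight_le:
  assumes lx: "length xs = m" and ly: "length ys = m" and sx: "reduced (cyc xs)"
    and c: "modulus dvd (digit_value k xs - k^j * digit_value k ys)"
  shows "digit_weight xs \<le> digit_weight ys"
proof -
  define zs where "zs = rotate ((m-1)*j) ys"
  have lz: "length zs = m" using ly zs_def by simp
  have "modulus dvd (digit_value k xs - digit_value k zs)"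
    using dvd_add[OF c modulus_dvd_pow_rotate[OF ly, of j]] unfolding zs_def by simp
  hence "modulus dvd - (digit_value k xs - digit_value k zs)" by (simp only: dvd_minus_iff)
  hence "modulus dvd (digit_value k zs - digit_value k xs)" by simp
  hence "same_class (cyc zs) (cyc xs)" unfolding same_class_def
    using value_of_cyc[OF lx] value_of_cyc[OF lz] by simp
  hence "weight (cyc xs) \<le> weight (cyc zs)" using reduced_weight_le[OF sx periodic_cyc] by simp
  thus ?thesis using weight_cyc[OF lx] weight_cyc[OF lz] digit_weight_rotate zs_def by simp
qed

lemma reduced_digits_exist:
  assumes X: "X = exceptional_pos \<or> X = exceptional_neg"
  shows "\<exists>xs. length xs = m \<and> reduced (cyc xs) \<and> \<not> X (cyc xs) \<and> modulus dvd (digit_value k xs - v)"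
proof -
  define ys where "ys = v # replicate (m - 1) 0"
  have ly: "length ys = m" using m_pos ys_def by simp
  have z: "digit_value k (replicate n 0) = 0" for n by (induction n) auto
  have iy: "digit_value k ys = v" unfolding ys_def using z by simp
  obtain f where f: "reduced f" "\<not> X f" "same_class f (cyc ys)"
    using reduced_in_class_avoiding[OF X periodic_cyc] by blast
  define xs where "xs = map (\<lambda>i. f (int i)) [0..<m]"
  have lx: "length xs = m" unfolding xs_def by simp
  have Fx: "cyc xs = f" unfolding xs_def by (rule cyc_of_periodic[OF reduced_periodic[OF f(1)]])
  have "modulus dvd (digit_value k xs - v)" using f(3) unfolding same_class_def
    using value_of_cyc[OF lx] value_of_cyc[OF ly] iy Fx by simp
  thus ?thesis using lx Fx f by blast
qed

lemma all_cyc_iff: "(\<forall>p. P (cyc xs p)) \<longleftrightarrow> (\<forall>i<m. P (xs ! i))"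
proof
  assume "\<forall>p. P (cyc xs p)" thus "\<forall>i<m. P (xs ! i)" using cyc_nth by metis
next
  assume a: "\<forall>i<m. P (xs ! i)"
  show "\<forall>p. P (cyc xs p)" unfolding cyc_def using a nat_mod_m_less by blast
qed

lemma bounded_cyc_iff: assumes l: "length xs = m" shows "(\<forall>p. \<bar>cyc xs p\<bar> \<le> r) \<longleftrightarrow> bounded r xs"
proof -
  have "(\<forall>p. \<bar>cyc xs p\<bar> \<le> r) \<longleftrightarrow> (\<forall>i<m. \<bar>xs!i\<bar> \<le> r)" by (rule all_cyc_iff)
  also have "\<dots> \<longleftrightarrow> (\<forall>x\<in>set xs. \<bar>x\<bar> \<le> r)" using l by (simp add: all_set_conv_all_nth)
  finally show ?thesis unfolding bounded_def using l m_pos by auto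
qed

lemma periodic_all_succ_iff:
  assumes pf: "periodic f"
  shows "(\<forall>p. Q (f p) (f (p+1))) \<longleftrightarrow> (\<forall>i<m. Q (f (int i - 1)) (f (int i)))"
proof
  assume a: "\<forall>p. Q (f p) (f (p+1))"
  show "\<forall>i<m. Q (f (int i - 1)) (f (int i))"
  proof (intro allI impI)
    fix i show "Q (f (int i - 1)) (f (int i))" using a[rule_format, of "int i - 1"] by simp
  qed
next
  assume a: "\<forall>i<m. Q (f (int i - 1)) (f (int i))"
  show "\<forall>p. Q (f p) (f (p+1))"
  proof
    fix p
    define i where "i = nat ((p+1) mod int m)"
    have i: "i < m" "int i = (p+1) mod int m" using nat_mod_m_less int_m_pos by (auto simp: i_def)
    have "f (int i) = f (p+1)" using i(2) periodic_mod[OF pf] by simp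
    moreover have "(int i - 1) mod int m = p mod int m"
      using i(2) by (metis add_diff_cancel_right' mod_diff_left_eq)
    hence "f (int i - 1) = f p" using periodic_cong[OF pf] by metis
    ultimately show "Q (f p) (f (p+1))" using a i(1) by metis
  qed
qed

lemma periodic_all_pred_iff:
  assumes pf: "periodic f"
  shows "(\<forall>p. Q (f p) (f (p - 1))) \<longleftrightarrow> (\<forall>i<m. Q (f (int i)) (f (int i - 1)))"
proof -
  have "(\<forall>p. Q (f p) (f (p - 1))) \<longleftrightarrow> (\<forall>p. Q (f (p+1)) (f p))"
  proof
    assume a: "\<forall>p. Q (f p) (f (p - 1))"
    show "\<forall>p. Q (f (p+1)) (f p)"
    proof fix p show "Q (f (p+1)) (f p)" using a[rule_format, of "p+1"] by simp qed
  next
    assume a: "\<forall>p. Q (f (p+1)) (f p)"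
    show "\<forall>p. Q (f p) (f (p - 1))"
    proof fix p show "Q (f p) (f (p - 1))" using a[rule_format, of "p - 1"] by simp qed
  qed
  also have "\<dots> \<longleftrightarrow> (\<forall>i<m. Q (f (int i)) (f (int i - 1)))"
    by (rule periodic_all_succ_iff[OF pf, of "\<lambda>x y. Q y x"])
  finally show ?thesis .
qed

lemma prev_eq_cyc: "length xs = m \<Longrightarrow> i < m \<Longrightarrow> prev xs i = cyc xs (int i - 1)"
proof -
  assume l: "length xs = m" "i < m"
  have "(int i - 1) mod int m = (int i - 1 + int m) mod int m" by simp
  also have "int i - 1 + int m = int (i + m - 1)" using m_pos by simp
  also have "int (i + m - 1) mod int m = int ((i + m - 1) mod m)" by (simp add: zmod_int)
  finally have "nat ((int i - 1) mod int m) = (i + m - 1) mod m" by simp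
  thus ?thesis unfolding prev_def cyc_def using l by simp
qed

lemma cyc_rev: "length xs = m \<Longrightarrow> cyc (rev xs) = (\<lambda>p. cyc xs (- 1 - p))"
proof
  fix p assume l: "length xs = m"
  define a where "a = nat (p mod int m)"
  have a: "a < m" "int a = p mod int m" using nat_mod_m_less int_m_pos by (auto simp: a_def)
  have "cyc (rev xs) p = xs ! (m - Suc a)" unfolding cyc_def a_def[symmetric] using a l
    by (simp add: rev_nth)
  moreover have "(- 1 - p) mod int m = int (m - Suc a)"
  proof -
    have "(- 1 - p) mod int m = (- 1 - p mod int m) mod int m" by (simp add: mod_diff_right_eq)
    also have "\<dots> = (- 1 - int a) mod int m" using a(2) by simp
    also have "\<dots> = (int m + (- 1 - int a)) mod int m" by (rule mod_add_self1[symmetric])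
    also have "\<dots> = (int m - 1 - int a) mod int m" by (simp add: algebra_simps)
    also have "\<dots> = int m - 1 - int a" using a(1) by (intro mod_pos_pos_trivial) auto
    finally show ?thesis using a by simp
  qed
  ultimately show "cyc (rev xs) p = cyc xs (- 1 - p)" unfolding cyc_def by simp
qed

lemma reduced_cyc_iff:
  assumes l: "length xs = m"
  shows "reduced (cyc xs) \<longleftrightarrow> bounded r xs \<and> (k = 2*r \<longrightarrow> even_cond_plus r xs)"
proof -
  have "(\<forall>p. admissible_pair (cyc xs p) (cyc xs (p+1)))
      \<longleftrightarrow> (\<forall>i<m. admissible_pair (cyc xs (int i - 1)) (cyc xs (int i)))"
    by (rule periodic_all_succ_iff[OF periodic_cyc])
  also have "\<dots> \<longleftrightarrow> even_cond_plus r xs"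
    unfolding even_cond_plus_def admissible_pair_def using l prev_eq_cyc[OF l] cyc_nth by auto
  finally show ?thesis unfolding reduced_def using bounded_cyc_iff[OF l] periodic_cyc by blast
qed

lemma reduced_cyc_rev_iff:
  assumes l: "length xs = m"
  shows "reduced (cyc (rev xs)) \<longleftrightarrow> bounded r xs \<and> (k = 2*r \<longrightarrow> even_cond_minus r xs)"
proof -
  have G: "cyc (rev xs) p = cyc xs (- 1 - p)" for p using cyc_rev[OF l] by simp
  have "(\<forall>p. admissible_pair (cyc (rev xs) p) (cyc (rev xs) (p+1)))
      \<longleftrightarrow> (\<forall>q. admissible_pair (cyc xs q) (cyc xs (q - 1)))"
    unfolding G
      by (metis add.commute diff_add_cancel diff_diff_eq2 minus_diff_eq uminus_add_conv_diff)
  also have "\<dots> \<longleftrightarrow> (\<forall>i<m. admissible_pair (cyc xs (int i)) (cyc xs (int i - 1)))"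
    by (rule periodic_all_pred_iff[OF periodic_cyc])
  also have "\<dots> \<longleftrightarrow> even_cond_minus r xs"
    unfolding even_cond_minus_def admissible_pair_def using l prev_eq_cyc[OF l] cyc_nth by auto
  moreover have "bounded r (rev xs) \<longleftrightarrow> bounded r xs" unfolding bounded_def by simp
  ultimately show ?thesis unfolding reduced_def
    using bounded_cyc_iff[of "rev xs"] l periodic_cyc by auto
qed

lemma alternating_cyc_eq:
  assumes l: "length xs = m" and sum: "\<forall>p. cyc xs p + cyc xs (p+1) = s" and so: "odd s"
  shows "\<exists>j\<ge>1. xs = concat (replicate j [cyc xs 0, s - cyc xs 0])"
proof -
  define x0 where "x0 = cyc xs 0"
  have alt: "cyc xs (int n) = (if even n then x0 else s - x0)" for n
  proof (induction n)
    case (Suc n)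
    have "cyc xs (int (Suc n)) = s - cyc xs (int n)"
      using sum[rule_format, of "int n"] by (simp add: add.commute[of 1])
    thus ?case using Suc by auto
  qed (simp add: x0_def)
  have "even m"
  proof (rule ccontr)
    assume "odd m"
    hence "s = 2 * x0" using alt[of m] periodic_add_m[OF periodic_cyc, where p=0] x0_def by simp
    thus False using so by simp
  qed
  then obtain j where j: "m = 2*j" by (metis evenE)
  have "xs = concat (replicate j [x0, s - x0])"
  proof (rule nth_equalityI)
    show "length xs = length (concat (replicate j [x0, s - x0]))"
      using l j length_concat_replicate_pair[of j x0 "s - x0"] by simp
  next
    fix i assume "i < length xs"
    hence i: "i < 2*j" "i < m" using l j by auto
    show "xs ! i = concat (replicate j [x0, s - x0]) ! i"
      using nth_concat_replicate_pair[OF i(1), of x0 "s - x0"] alt[of i] cyc_nth[OF i(2), of xs]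
        by simp
  qed
  thus ?thesis using j m_pos unfolding x0_def by auto
qed

lemma alternating_cyc_iff:
  assumes l: "length xs = m" and s: "a + b = s" and so: "odd s"
  shows "((\<forall>p. cyc xs p = a \<or> cyc xs p = b) \<and> (\<forall>p. cyc xs p + cyc xs (p+1) = s))
     \<longleftrightarrow> (\<exists>j\<ge>1. xs = concat (replicate j [a,b]) \<or> xs = concat (replicate j [b,a]))"
proof
  assume A: "(\<forall>p. cyc xs p = a \<or> cyc xs p = b) \<and> (\<forall>p. cyc xs p + cyc xs (p+1) = s)"
  then obtain j where j: "j \<ge> 1" "xs = concat (replicate j [cyc xs 0, s - cyc xs 0])"
    using alternating_cyc_eq[OF l _ so] by blast
  have "cyc xs 0 = a \<or> cyc xs 0 = b" using A by blast
  hence "xs = concat (replicate j [a,b]) \<or> xs = concat (replicate j [b,a])" using j(2) s by auto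
  thus "\<exists>j\<ge>1. xs = concat (replicate j [a,b]) \<or> xs = concat (replicate j [b,a])" using j(1) by blast
next
  assume "\<exists>j\<ge>1. xs = concat (replicate j [a,b]) \<or> xs = concat (replicate j [b,a])"
  then obtain j c d where j: "xs = concat (replicate j [c,d])"
    and cd: "(c = a \<and> d = b) \<or> (c = b \<and> d = a)"
    by blast
  have m2: "m = 2*j" using l length_concat_replicate_pair[of j c d] unfolding j by linarith
  have "cyc xs p = (if even p then c else d)" for p
  proof -
    have n: "nat (p mod int m) < 2*j" using nat_mod_m_less m2 by simp
    have "even (nat (p mod int m)) \<longleftrightarrow> even (p mod int m)" using int_m_pos by (simp add: even_nat_iff)
    also have "\<dots> \<longleftrightarrow> even p" using even_mod_even_iff[of "int m" p] int_m_pos m2 by simp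
    finally show ?thesis unfolding cyc_def j using nth_concat_replicate_pair[OF n, of c d] by simp
  qed
  thus "(\<forall>p. cyc xs p = a \<or> cyc xs p = b) \<and> (\<forall>p. cyc xs p + cyc xs (p+1) = s)"
    using cd s by (auto simp: algebra_simps)
qed

lemma exceptional_neg_odd_iff: "length xs = m \<Longrightarrow> k \<noteq> 2*r \<Longrightarrow> exceptional_neg (cyc xs)
    \<longleftrightarrow> xs = replicate m (- r)"
  unfolding exceptional_neg_def using periodic_cyc all_cyc_iff[of "\<lambda>x. x = - r" xs]
  by (auto simp: list_eq_iff_nth_eq)

lemma exceptional_neg_even_iff: "length xs = m \<Longrightarrow> k = 2*r \<Longrightarrow>
   exceptional_neg (cyc xs) \<longleftrightarrow>
     (\<exists>j\<ge>1. xs = concat (replicate j [- r + 1, - r]) \<or> xs = concat (replicate j [- r, - r + 1]))"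
proof -
  assume l: "length xs = m" and ev: "k = 2*r"
  have "exceptional_neg (cyc xs) \<longleftrightarrow> ((\<forall>p. cyc xs p = - r + 1 \<or> cyc xs p = - r)
        \<and> (\<forall>p. cyc xs p + cyc xs (p+1) = 1 - 2*r))"
    unfolding exceptional_neg_def using periodic_cyc ev by auto
  also have "\<dots> \<longleftrightarrow> (\<exists>j\<ge>1. xs = concat (replicate j [- r + 1, - r])
        \<or> xs = concat (replicate j [- r, - r + 1]))"
    by (rule alternating_cyc_iff[OF l]) auto
  finally show ?thesis .
qed

lemma exceptional_pos_even_iff: "length xs = m \<Longrightarrow> k = 2*r \<Longrightarrow>
   exceptional_pos (cyc xs) \<longleftrightarrow>
     (\<exists>j\<ge>1. xs = concat (replicate j [r, r - 1]) \<or> xs = concat (replicate j [r - 1, r]))"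
proof -
  assume l: "length xs = m" and ev: "k = 2*r"
  have "exceptional_pos (cyc xs) \<longleftrightarrow> ((\<forall>p. cyc xs p = r \<or> cyc xs p = r - 1)
        \<and> (\<forall>p. cyc xs p + cyc xs (p+1) = 2*r - 1))"
    unfolding exceptional_pos_def using periodic_cyc ev by auto
  also have "\<dots> \<longleftrightarrow> (\<exists>j\<ge>1. xs = concat (replicate j [r, r - 1])
        \<or> xs = concat (replicate j [r - 1, r]))"
    by (rule alternating_cyc_iff[OF l]) auto
  finally show ?thesis .
qed

lemma exceptional_pos_even_rev_iff: "length xs = m \<Longrightarrow> k = 2*r \<Longrightarrow>
   exceptional_pos (cyc (rev xs)) \<longleftrightarrow>
     (\<exists>j\<ge>1. xs = concat (replicate j [r, r - 1]) \<or> xs = concat (replicate j [r - 1, r]))"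
proof -
  assume l: "length xs = m" and ev: "k = 2*r"
  have "exceptional_pos (cyc (rev xs)) \<longleftrightarrow> (\<exists>j\<ge>1. rev xs = concat (replicate j [r, r - 1])
        \<or> rev xs = concat (replicate j [r - 1, r]))"
    using exceptional_pos_even_iff[of "rev xs"] l ev by simp
  also have "\<dots> \<longleftrightarrow> (\<exists>j\<ge>1. xs = concat (replicate j [r - 1, r])
        \<or> xs = concat (replicate j [r, r - 1]))"
    by (simp add: rev_swap rev_concat_replicate_pair disj_commute)
  finally show ?thesis by blast
qed

lemma exceptional_neg_odd_rev_iff: "length xs = m \<Longrightarrow> k \<noteq> 2*r \<Longrightarrow> exceptional_neg (cyc (rev xs))
    \<longleftrightarrow> xs = replicate m (- r)"
  using exceptional_neg_odd_iff[of "rev xs"] by (simp add: rev_swap)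

end

abbreviation base :: "nat \<Rightarrow> rat" where "base k \<equiv> of_nat k"

lemma bs_mult_assoc:
  "k \<ge> 1 \<Longrightarrow> bs_mult k (bs_mult k a b) c = bs_mult k a (bs_mult k b c)"
  unfolding bs_mult_def by (simp add: power_int_add algebra_simps)

lemma bs_mult_unit_left: "bs_mult k (0,0) g = g" unfolding bs_mult_def by simp

lemma bs_mult_unit_right: "bs_mult k g (0,0) = g" unfolding bs_mult_def by simp

lemma bs_mult_inv_right:
  assumes "k \<ge> 1"
  shows "bs_mult k g (bs_inv k g) = (0,0)"
proof -
  have "base k powi snd g * base k powi (- snd g) = 1" using assms by (simp add: power_int_minus)
  thus ?thesis unfolding bs_mult_def bs_inv_def by (simp add: algebra_simps)
qed

lemma bs_eval_append:
  "k \<ge> 1 \<Longrightarrow> bs_eval k (u @ v) = bs_mult k (bs_eval k u) (bs_eval k v)"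
  by (induction u) (auto simp: bs_mult_unit_left bs_mult_assoc)

lemma bs_conjugate:
  assumes "k \<ge> 1"
  shows "bs_mult k (bs_mult k c g) (bs_inv k c)
    = (base k powi snd c * fst g + fst c * (1 - base k powi snd g), snd g)"
proof -
  have "base k powi (snd c + snd g) * base k powi (- snd c) = base k powi snd g"
    using assms by (simp add: power_int_add power_int_minus)
  thus ?thesis unfolding bs_mult_def bs_inv_def by (simp add: algebra_simps)
qed

definition kadic :: "nat \<Rightarrow> rat \<Rightarrow> bool" where
  "kadic k x \<longleftrightarrow> (\<exists>p::int. \<exists>e::nat. x = of_int p / base k ^ e)"

lemma kadic_of_int: "kadic k (of_int a)"
  unfolding kadic_def by (rule exI[of _ a], rule exI[of _ 0]) simp

lemma kadic_add:
  assumes "k \<ge> 1" "kadic k x" "kadic k y"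
  shows "kadic k (x + y)"
proof -
  obtain p e q f where x: "x = of_int p / base k ^ e" and y: "y = of_int q / base k ^ f"
    using assms unfolding kadic_def by blast
  have "x + y = of_int (p * int k ^ f + q * int k ^ e) / base k ^ (e + f)"
    unfolding x y using assms(1) by (simp add: field_simps power_add)
  thus ?thesis unfolding kadic_def by blast
qed

lemma kadic_mult:
  assumes "kadic k x" "kadic k y"
  shows "kadic k (x * y)"
proof -
  obtain p e q f where x: "x = of_int p / base k ^ e" and y: "y = of_int q / base k ^ f"
    using assms unfolding kadic_def by blast
  have "x * y = of_int (p * q) / base k ^ (e + f)" unfolding x y by (simp add: power_add)
  thus ?thesis unfolding kadic_def by blast
qed

lemma kadic_uminus: "kadic k x \<Longrightarrow> kadic k (- x)"
  unfolding kadic_def by (metis minus_divide_left of_int_minus)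

lemma kadic_powi: "kadic k (base k powi j)"
proof (cases "j \<ge> 0")
  case True
  hence "base k powi j = of_int (int k ^ nat j) / base k ^ 0"
    by (metis div_by_1 nat_0_le of_int_of_nat_eq of_nat_power power_0 power_int_of_nat)
  thus ?thesis unfolding kadic_def by blast
next
  case False
  hence "base k powi j = of_int 1 / base k ^ nat (- j)"
    by (metis nat_0_le neg_0_le_iff_le nle_le of_int_1 power_int_minus_divide power_int_of_nat
        minus_minus)
  thus ?thesis unfolding kadic_def by blast
qed

lemma kadic_clear_denominator:
  assumes "k \<ge> 1" "kadic k x"
  obtains e where "\<And>N. N \<ge> e \<Longrightarrow> \<exists>p. base k ^ N * x = of_int p"
proof -
  obtain p e where x: "x = of_int p / base k ^ e" using assms unfolding kadic_def by blast
  have "base k ^ N * x = of_int (p * int k ^ (N - e))" if "N \<ge> e" for N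
  proof -
    have "base k ^ N = base k ^ (N - e) * base k ^ e" using that by (simp flip: power_add)
    thus ?thesis using assms(1) unfolding x by simp
  qed
  thus ?thesis using that by blast
qed

lemma kadic_fst_bs_eval: "k \<ge> 1 \<Longrightarrow> kadic k (fst (bs_eval k w))"
proof (induction w)
  case Nil thus ?case using kadic_of_int[of k 0] by simp
next
  case (Cons l w)
  have "kadic k (fst (letter_val l))"
    using kadic_of_int[of k 0] kadic_of_int[of k 1] kadic_of_int[of k "-1"] by (cases l) auto
  moreover have "fst (bs_eval k (l # w))
      = fst (letter_val l) + base k powi snd (letter_val l) * fst (bs_eval k w)"
    by (simp add: bs_mult_def)
  ultimately show ?case
    using kadic_add[OF Cons.prems] kadic_mult[OF kadic_powi Cons.IH[OF Cons.prems]] by simp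
qed

lemma bs_eval_replicate_T: "bs_eval k (replicate n T) = (0, int n)"
  by (induction n) (auto simp: bs_mult_def)

lemma bs_eval_replicate_Tinv: "bs_eval k (replicate n Tinv) = (0, - int n)"
  by (induction n) (auto simp: bs_mult_def)

lemma bs_eval_apow: "bs_eval k (apow x) = (of_int x, 0)"
proof -
  have "bs_eval k (replicate n A) = (of_nat n, 0)"
    "bs_eval k (replicate n Ainv) = (- of_nat n, 0)" for n
    by (induction n) (auto simp: bs_mult_def)
  thus ?thesis unfolding apow_def by auto
qed

lemma bs_group_iff:
  assumes "k \<ge> 1"
  shows "g \<in> bs_group k \<longleftrightarrow> kadic k (fst g)"
proof
  assume "g \<in> bs_group k"
  thus "kadic k (fst g)" using kadic_fst_bs_eval[OF assms] unfolding bs_group_def by auto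
next
  assume "kadic k (fst g)"
  then obtain p e where pe: "fst g = of_int p / base k ^ e" unfolding kadic_def by blast
  define tw where
    "tw = (if snd g \<ge> 0 then replicate (nat (snd g)) T else replicate (nat (- snd g)) Tinv)"
  have etw: "bs_eval k tw = (0, snd g)"
    unfolding tw_def using bs_eval_replicate_T bs_eval_replicate_Tinv by auto
  have "bs_eval k (replicate e Tinv @ apow p @ replicate e T @ tw) = g"
    unfolding bs_eval_append[OF assms] bs_eval_replicate_T bs_eval_replicate_Tinv bs_eval_apow etw
    using pe assms by (cases g) (simp add: bs_mult_def power_int_minus_divide)
  thus "g \<in> bs_group k" unfolding bs_group_def by (metis rangeI)
qed

lemma bs_conj_iff:
  assumes "k \<ge> 1"
  shows "bs_conj k g h \<longleftrightarrow> snd h = snd g \<and>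
    (\<exists>j c. kadic k c \<and> fst h = base k powi j * fst g + c * (1 - base k powi snd g))"
proof
  assume "bs_conj k g h"
  then obtain c where "c \<in> bs_group k" "h = bs_mult k (bs_mult k c g) (bs_inv k c)"
    unfolding bs_conj_def by blast
  thus "snd h = snd g \<and> (\<exists>j c. kadic k c
        \<and> fst h = base k powi j * fst g + c * (1 - base k powi snd g))"
    using bs_group_iff[OF assms] bs_conjugate[OF assms] by auto
next
  assume "snd h = snd g \<and> (\<exists>j c. kadic k c
        \<and> fst h = base k powi j * fst g + c * (1 - base k powi snd g))"
  then obtain j c where h: "snd h = snd g" "kadic k c"
    "fst h = base k powi j * fst g + c * (1 - base k powi snd g)" by blast
  have "(c, j) \<in> bs_group k" using bs_group_iff[OF assms] h(2) by simp
  moreover have "h = bs_mult k (bs_mult k (c, j) g) (bs_inv k (c, j))"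
    using bs_conjugate[OF assms] h by (cases h) simp
  ultimately show "bs_conj k g h" unfolding bs_conj_def by blast
qed

lemma bs_conj_refl: "k \<ge> 1 \<Longrightarrow> bs_conj k g g"
  unfolding bs_conj_iff using kadic_of_int[of k 0] by (intro conjI exI[of _ 0]) auto

lemma bs_conj_sym:
  assumes k: "k \<ge> 1" and "bs_conj k g h"
  shows "bs_conj k h g"
proof -
  obtain j c where h: "snd h = snd g" "kadic k c"
    "fst h = base k powi j * fst g + c * (1 - base k powi snd g)"
    using assms(2) unfolding bs_conj_iff[OF k] by blast
  have kj: "base k powi (- j) * base k powi j = 1" using k by (simp add: power_int_minus)
  have "fst g = base k powi (- j) * (base k powi j * fst g)" by (simp add: mult.assoc[symmetric] kj)
  also have "\<dots> = base k powi (- j) * fst h + (- (base k powi (- j) * c)) * (1 - base k powi snd h)"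
    unfolding h(3) h(1) by (simp add: algebra_simps)
  finally have "fst g = base k powi (- j) * fst h
      + (- (base k powi (- j) * c)) * (1 - base k powi snd h)" .
  thus ?thesis unfolding bs_conj_iff[OF k]
    using h kadic_uminus[OF kadic_mult[OF kadic_powi h(2)]] by metis
qed

lemma bs_conj_trans:
  assumes k: "k \<ge> 1" and "bs_conj k g h" "bs_conj k h l"
  shows "bs_conj k g l"
proof -
  obtain j c where h: "snd h = snd g" "kadic k c"
    "fst h = base k powi j * fst g + c * (1 - base k powi snd g)"
    using assms(2) unfolding bs_conj_iff[OF k] by blast
  obtain i d where l: "snd l = snd h" "kadic k d"
    "fst l = base k powi i * fst h + d * (1 - base k powi snd h)"
    using assms(3) unfolding bs_conj_iff[OF k] by blast
  have "fst l = base k powi (i + j) * fst g + (base k powi i * c + d) * (1 - base k powi snd g)"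
    unfolding l(3) h(3) l(1) h(1) using k by (simp add: algebra_simps power_int_add)
  thus ?thesis unfolding bs_conj_iff[OF k]
    using h l kadic_add[OF k kadic_mult[OF kadic_powi h(2)] l(2)] by metis
qed

lemma bs_conj_rotate:
  assumes "k \<ge> 1"
  shows "bs_conj k (bs_eval k (u @ v)) (bs_eval k (v @ u))"
proof -
  have "bs_eval k (v @ u)
      = bs_mult k (bs_mult k (bs_eval k v) (bs_eval k (u @ v))) (bs_inv k (bs_eval k v))"
    unfolding bs_eval_append[OF assms] bs_mult_assoc[OF assms] bs_mult_inv_right[OF assms]
      bs_mult_unit_right ..
  thus ?thesis unfolding bs_conj_def bs_group_def by blast
qed

lemma bs_conj_scale: "k \<ge> 1 \<Longrightarrow> bs_conj k (x, n) (base k powi j * x, n)"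
  unfolding bs_conj_iff using kadic_of_int[of k 0] by (intro conjI exI[of _ j]) auto

lemma bs_conj_of_int:
  assumes "k \<ge> 1" "g \<in> bs_group k"
  obtains a where "bs_conj k g (of_int a, snd g)"
proof -
  obtain p e where "fst g = of_int p / base k ^ e" using assms bs_group_iff unfolding kadic_def
    by blast
  hence "base k powi int e * fst g = of_int p" using assms(1) by simp
  thus ?thesis using that bs_conj_scale[OF assms(1), of "fst g" "snd g" "int e"]
    by (metis prod.collapse)
qed

lemma one_minus_powi_eq:
  assumes "k \<ge> 1" "n = int m \<or> n = - int m"
  obtains u where "u \<noteq> 0" "kadic k u" "kadic k (1 / u)"
    "1 - base k powi n = of_int (int k ^ m - 1) * u"
proof (cases "n = int m")
  case True
  show ?thesis
    by (rule that[of "-1"]) (use True kadic_of_int[of k "-1"] in simp_all)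
next
  case False
  hence n: "n = - int m" using assms(2) by simp
  show ?thesis
  proof (rule that[of "base k powi (- int m)"])
    show "base k powi (- int m) \<noteq> 0" using assms(1) by simp
    show "kadic k (base k powi (- int m))" by (rule kadic_powi)
    show "kadic k (1 / base k powi (- int m))"
      using kadic_powi[of k "int m"] by (simp add: power_int_minus divide_inverse)
    show "1 - base k powi n = of_int (int k ^ m - 1) * base k powi (- int m)"
      using n assms(1) by (simp add: power_int_minus field_simps)
  qed
qed

text \<open>Clearing denominators with a power \<open>k^N\<close>, \<open>m dvd N\<close>, which is \<open>1\<close> modulo \<open>k^m - 1\<close>.\<close>

lemma kadic_eq_imp_dvd:
  assumes k: "k \<ge> 1" and m: "m \<ge> 1" and c: "kadic k c"
    and eq: "of_int b = base k powi j * of_int a + c * of_int (int k ^ m - 1)"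
  shows "\<exists>i::nat. (int k ^ m - 1) dvd (b - int k ^ i * a)"
    (is "\<exists>i. ?M dvd _")
proof -
  obtain e where e: "\<And>N. N \<ge> e \<Longrightarrow> \<exists>p. base k ^ N * c = of_int p"
    using kadic_clear_denominator[OF k c] by blast
  define N where "N = m * (e + nat \<bar>j\<bar>)"
  have "e + nat \<bar>j\<bar> \<le> N" unfolding N_def using m by simp
  hence "N \<ge> e" "int N + j \<ge> 0" by linarith+
  then obtain p where p: "base k ^ N * c = of_int p" using e by blast
  define i where "i = nat (int N + j)"
  have "base k ^ N * base k powi j = base k powi (int N + j)"
    using k by (simp add: power_int_add)
  also have "\<dots> = base k ^ i"
    using \<open>int N + j \<ge> 0\<close> by (simp add: i_def flip: power_int_of_nat)
  finally have Ni: "base k ^ N * base k powi j = base k ^ i" .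
  have "base k ^ N * of_int b = base k ^ N * (base k powi j * of_int a + c * of_int ?M)"
    using eq by simp
  also have "\<dots> = base k ^ i * of_int a + base k ^ N * c * of_int ?M"
    using Ni by (simp add: algebra_simps)
  finally have "of_int (int k ^ N * b) = (of_int (int k ^ i * a + p * ?M) :: rat)" using p by simp
  hence eq': "int k ^ N * b = int k ^ i * a + p * ?M" by (simp only: of_int_eq_iff)
  have "?M dvd (int k ^ N - 1) * b"
    using power_diff_1_eq[of "int k ^ m" "e + nat \<bar>j\<bar>"] unfolding N_def power_mult by simp
  hence "?M dvd p * ?M - (int k ^ N - 1) * b" by simp
  also have "p * ?M - (int k ^ N - 1) * b = b - int k ^ i * a"
    using eq' by (simp add: algebra_simps)
  finally show ?thesis by blast
qed

lemma bs_conj_int_iff: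
  assumes k: "k \<ge> 1" and n: "n = int m \<or> n = - int m" and m: "m \<ge> 1"
  shows "bs_conj k (of_int a, n) (of_int b, n)
    \<longleftrightarrow> (\<exists>j::nat. (int k ^ m - 1) dvd (b - int k ^ j * a))"
    (is "_ \<longleftrightarrow> (\<exists>j. ?M dvd _)")
proof -
  obtain u where u: "kadic k u" "kadic k (1 / u)" "1 - base k powi n = of_int ?M * u" "u \<noteq> 0"
    using one_minus_powi_eq[OF k n] by blast
  show ?thesis
  proof
    assume "bs_conj k (of_int a, n) (of_int b, n)"
    then obtain j c where c: "kadic k c"
      "of_int b = base k powi j * of_int a + c * (1 - base k powi n)"
      unfolding bs_conj_iff[OF k] by auto
    hence "of_int b = base k powi j * of_int a + c * u * of_int ?M"
      using u(3) by (simp add: algebra_simps)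
    thus "\<exists>j. ?M dvd (b - int k ^ j * a)"
      using kadic_eq_imp_dvd[OF k m kadic_mult[OF c(1) u(1)]] by blast
  next
    assume "\<exists>j. ?M dvd (b - int k ^ j * a)"
    then obtain j q where "b - int k ^ j * a = ?M * q" by (elim exE dvdE)
    hence "b = int k ^ j * a + ?M * q" by simp
    hence "of_int b = (of_int (int k ^ j * a + ?M * q) :: rat)" by (simp only:)
    also have "\<dots> = base k powi int j * of_int a + (of_int q * (1 / u)) * (1 - base k powi n)"
      using u(3,4) by simp
    finally have "of_int b = base k powi int j * of_int a
        + (of_int q * (1 / u)) * (1 - base k powi n)" .
    thus "bs_conj k (of_int a, n) (of_int b, n)"
      unfolding bs_conj_iff[OF k] using kadic_mult[OF kadic_of_int u(2)]
      by (metis snd_conv fst_conv)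
  qed
qed

lemma length_apow: "length (apow x) = nat \<bar>x\<bar>" by (simp add: apow_def)

lemma plus_word_Cons: "plus_word (x # xs) = apow x @ T # plus_word xs" by (simp add: plus_word_def)

lemma minus_word_Cons: "minus_word (x # xs) = Tinv # apow x @ minus_word xs"
  by (simp add: minus_word_def)

lemma bs_eval_plus_word:
  assumes "k \<ge> 1"
  shows "bs_eval k (plus_word xs) = (of_int (digit_value (int k) xs), int (length xs))"
proof (induction xs)
  case Nil thus ?case by (simp add: plus_word_def)
next
  case (Cons x xs)
  have "bs_eval k (plus_word (x # xs))
      = bs_mult k (bs_eval k (apow x)) (bs_mult k (0,1) (bs_eval k (plus_word xs)))"
    unfolding plus_word_Cons bs_eval_append[OF assms] by simp
  thus ?case using Cons by (simp add: bs_eval_apow bs_mult_def)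
qed

lemma bs_eval_minus_word:
  assumes "k \<ge> 1"
  shows "bs_eval k (minus_word xs)
    = (of_int (digit_value (int k) (rev xs)) / base k ^ length xs, - int (length xs))"
proof (induction xs)
  case Nil thus ?case by (simp add: minus_word_def)
next
  case (Cons x xs)
  have "bs_eval k (minus_word (x # xs))
      = bs_mult k (0, -1) (bs_mult k (bs_eval k (apow x)) (bs_eval k (minus_word xs)))"
    unfolding minus_word_Cons by (simp add: bs_eval_append[OF assms])
  also have "\<dots> =
      (base k powi (-1) * (of_int x + of_int (digit_value (int k) (rev xs)) / base k ^ length xs),
      - int (length xs) - 1)"
    using Cons by (simp add: bs_eval_apow bs_mult_def)
  also have "base k powi (-1) * (of_int x
        + of_int (digit_value (int k) (rev xs)) / base k ^ length xs)
      = of_int (digit_value (int k) (rev (x # xs))) / base k ^ length (x # xs)"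
    using assms by (simp add: digit_value_append power_int_minus field_simps)
  finally show ?case by simp
qed

lemma bs_conj_minus_word:
  assumes "k \<ge> 1"
  shows "bs_conj k (bs_eval k (minus_word xs))
      (of_int (digit_value (int k) (rev xs)), - int (length xs))"
  using bs_conj_scale[OF assms, of "of_int (digit_value (int k) (rev xs)) / base k ^ length xs"
      "- int (length xs)" "int (length xs)"] assms
  unfolding bs_eval_minus_word[OF assms] by simp

lemma length_plus_word: "int (length (plus_word xs)) = int (length xs) + digit_weight xs"
  by (induction xs) (auto simp: plus_word_def digit_weight_def length_apow)

lemma length_minus_word: "int (length (minus_word xs)) = int (length xs) + digit_weight xs"
  by (induction xs) (auto simp: minus_word_def digit_weight_def length_apow)

lemma append_eq_append_sep:
  assumes "c \<notin> set a" "c \<notin> set b" "u = [] \<or> hd u = c" "v = [] \<or> hd v = c" "a @ u = b @ v"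
  shows "a = b \<and> u = v"
  using assms
proof (induction a arbitrary: b)
  case Nil thus ?case by (cases b) auto
next
  case (Cons x a)
  thus ?case using Cons.IH by (cases b) auto
qed

lemma apow_inj: "apow x = apow y \<Longrightarrow> x = y"
  unfolding apow_def by (cases "x = 0"; cases "y = 0") (auto split: if_splits)

lemma plus_word_inj: "plus_word xs = plus_word ys \<Longrightarrow> xs = ys"
proof (induction xs arbitrary: ys)
  case Nil thus ?case by (cases ys) (auto simp: plus_word_def)
next
  case (Cons x xs)
  then obtain y ys' where ys: "ys = y # ys'" by (cases ys) (auto simp: plus_word_def)
  have "apow x @ T # plus_word xs = apow y @ T # plus_word ys'"
    using Cons.prems ys by (simp add: plus_word_Cons)
  hence "apow x = apow y \<and> T # plus_word xs = T # plus_word ys'"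
    by (intro append_eq_append_sep[of T]) (auto simp: apow_def)
  thus ?case using Cons.IH apow_inj ys by auto
qed

lemma minus_word_inj: "minus_word xs = minus_word ys \<Longrightarrow> xs = ys"
proof (induction xs arbitrary: ys)
  case Nil thus ?case by (cases ys) (auto simp: minus_word_def)
next
  case (Cons x xs)
  then obtain y ys' where ys: "ys = y # ys'" by (cases ys) (auto simp: minus_word_def)
  have "apow x @ minus_word xs = apow y @ minus_word ys'"
    using Cons.prems ys by (simp add: minus_word_Cons)
  moreover have "minus_word zs = [] \<or> hd (minus_word zs) = Tinv" for zs
    by (cases zs) (auto simp: minus_word_Cons minus_word_def)
  ultimately have "apow x = apow y \<and> minus_word xs = minus_word ys'"
    by (intro append_eq_append_sep[of Tinv]) (auto simp: apow_def)
  thus ?case using Cons.IH apow_inj ys by auto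
qed

lemma concat_map_rotate: "\<exists>n'. concat (map g (rotate n xs)) = rotate n' (concat (map g xs))"
proof -
  define i where "i = n mod length xs"
  have "concat (map g (rotate n xs)) = concat (map g (drop i xs)) @ concat (map g (take i xs))"
    by (simp add: i_def rotate_drop_take)
  also have "\<dots> = rotate (length (concat (map g (take i xs)))) (concat (map g xs))"
    by (metis append_take_drop_id concat_append map_append rotate_append)
  finally show ?thesis by blast
qed

lemma plus_word_rotate: "\<exists>n'. plus_word (rotate n xs) = rotate n' (plus_word xs)"
  unfolding plus_word_def by (rule concat_map_rotate)

lemma minus_word_rotate: "\<exists>n'. minus_word (rotate n xs) = rotate n' (minus_word xs)"
  unfolding minus_word_def by (rule concat_map_rotate)

lemma rev_rotate: "\<exists>n'. rev (rotate n ys) = rotate n' (rev ys)"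
proof (cases "ys = [] \<or> n mod length ys = 0")
  case True
  hence "rotate n ys = ys" by (metis rotate_conv_mod rotate0 id_apply rotate_is_Nil_conv)
  thus ?thesis by (metis rotate0 id_apply)
next
  case False
  define L where "L = length ys"
  have L: "L > 0" using False L_def by simp
  define n' where "n' = L - n mod L"
  have n': "n' mod L = n'" "L - n' = n mod L" using False L unfolding n'_def L_def by auto
  have "rotate n' (rev ys) = rev (rotate (L - n' mod L) ys)" using rotate_rev[of n' ys] L_def
    by simp
  also have "\<dots> = rev (rotate n ys)" using n' L_def by (simp add: rotate_conv_mod[symmetric])
  finally show ?thesis by metis
qed

definition count_a :: "letter list \<Rightarrow> nat" where
  "count_a w = length (filter (\<lambda>l. l = A \<or> l = Ainv) w)"

definition count_t :: "letter list \<Rightarrow> nat" where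
  "count_t w = length (filter (\<lambda>l. l = T \<or> l = Tinv) w)"

lemma length_eq_count_a_count_t: "length w = count_a w + count_t w"
proof (induction w)
  case (Cons l w) thus ?case by (cases l) (auto simp: count_a_def count_t_def)
qed (simp add: count_a_def count_t_def)

lemma abs_snd_bs_eval_le: "\<bar>snd (bs_eval k w)\<bar> \<le> int (count_t w)"
proof (induction w)
  case (Cons l w) thus ?case by (cases l) (auto simp: bs_mult_def count_t_def)
qed simp

lemma digit_value_replicate_zero: "digit_value k (replicate n 0) = 0"
  by (induction n) auto

definition represented_by :: "nat \<Rightarrow> nat \<Rightarrow> rat \<Rightarrow> int list \<Rightarrow> bool" where
  "represented_by k m x ys \<longleftrightarrow> length ys = m \<and>
     (\<exists>z. kadic k z \<and> x = of_int (digit_value (int k) ys) + of_int (int k ^ m - 1) * z)"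

lemma represented_by_add:
  assumes "represented_by k m x ys" "m \<ge> 1"
  shows "represented_by k m (of_int c + x) ((hd ys + c) # tl ys)"
  using assms unfolding represented_by_def by (cases ys) auto

lemma represented_by_mult:
  assumes k: "k \<ge> 2" and m: "m \<ge> 1" and rep: "represented_by k m x ys"
  shows "represented_by k m (base k * x) (rotate (m - 1) ys)"
proof -
  interpret periodic_digits "int k" m "int k div 2" using k m by unfold_locales auto
  obtain z where ys: "length ys = m" "kadic k z"
    "x = of_int (digit_value (int k) ys) + of_int modulus * z"
    using rep unfolding represented_by_def modulus_def by blast
  obtain q where "int k ^ 1 * digit_value (int k) ys - digit_value (int k) (rotate ((m - 1) * 1) ys)
      = modulus * q"
    using modulus_dvd_pow_rotate[OF ys(1), of 1] by (elim dvdE)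
  hence q: "int k * digit_value (int k) ys = digit_value (int k) (rotate (m - 1) ys) + modulus * q"
    by simp
  have "base k * x = of_int (int k * digit_value (int k) ys) + of_int modulus * (base k * z)"
    using ys(3) by (simp add: algebra_simps)
  also have "\<dots> = of_int (digit_value (int k) (rotate (m - 1) ys))
      + of_int modulus * (base k * z + of_int q)"
    unfolding q by (simp add: algebra_simps)
  finally have "base k * x = of_int (digit_value (int k) (rotate (m - 1) ys))
      + of_int modulus * (base k * z + of_int q)" .
  moreover have "kadic k (base k * z + of_int q)"
    using kadic_add[OF _ kadic_mult[OF kadic_of_int[of k "int k"] ys(2)] kadic_of_int] k by simp
  ultimately show ?thesis using ys(1) unfolding represented_by_def modulus_def by auto
qed

lemma represented_by_divide:
  assumes k: "k \<ge> 2" and m: "m \<ge> 1" and rep: "represented_by k m x ys"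
  shows "represented_by k m (inverse (base k) * x) (rotate 1 ys)"
proof -
  interpret periodic_digits "int k" m "int k div 2" using k m by unfold_locales auto
  obtain z where ys: "length ys = m" "kadic k z"
    "x = of_int (digit_value (int k) ys) + of_int modulus * z"
    using rep unfolding represented_by_def modulus_def by blast
  obtain q where "digit_value (int k) ys - int k ^ 1 * digit_value (int k) (rotate 1 ys)
      = modulus * q"
    using modulus_dvd_rotate[OF ys(1), of 1] by (elim dvdE)
  hence q: "digit_value (int k) ys = int k * digit_value (int k) (rotate 1 ys) + modulus * q"
    by simp
  have "inverse (base k) * x
      = of_int (digit_value (int k) (rotate 1 ys)) + of_int modulus *
        (inverse (base k) * (of_int q + z))"
    using ys(3) k unfolding q by (simp add: field_simps)
  moreover have "kadic k (inverse (base k))" using kadic_powi[of k "-1"] by simp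
  hence "kadic k (inverse (base k) * (of_int q + z))"
    using kadic_mult kadic_add[OF _ kadic_of_int ys(2)] k by simp
  ultimately show ?thesis using ys(1) unfolding represented_by_def modulus_def by auto
qed

text \<open>Reading a word from the right, \<open>a\<^sup>\<plusminus>\<^sup>1\<close> changes one digit by \<open>\<plusminus>1\<close> and
  \<open>t\<^sup>\<plusminus>\<^sup>1\<close> rotates the digits.\<close>

lemma digits_of_word:
  assumes k: "k \<ge> 2" and m: "m \<ge> 1"
  shows "\<exists>ys. represented_by k m (fst (bs_eval k w)) ys \<and> digit_weight ys \<le> int (count_a w)"
proof (induction w)
  case Nil
  have "represented_by k m 0 (replicate m 0)"
    unfolding represented_by_def using kadic_of_int[of k 0]
    by (intro conjI exI[of _ 0]) (simp_all add: digit_value_replicate_zero)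
  thus ?case by (intro exI[of _ "replicate m 0"]) (simp add: digit_weight_def sum_list_replicate)
next
  case (Cons l w)
  then obtain ys where ys: "represented_by k m (fst (bs_eval k w)) ys"
    "digit_weight ys \<le> int (count_a w)"
    by blast
  have len: "length ys = m" using ys(1) unfolding represented_by_def by simp
  have wt: "digit_weight ((hd ys + c) # tl ys) \<le> digit_weight ys + \<bar>c\<bar>" for c
    using len m by (cases ys) (auto simp: digit_weight_def)
  have rot: "digit_weight (rotate n ys) = digit_weight ys" for n by (rule digit_weight_rotate)
  show ?case
  proof (cases l)
    case A
    thus ?thesis using represented_by_add[OF ys(1) m, of 1] wt[of 1] ys(2)
      by (intro exI[of _ "(hd ys + 1) # tl ys"]) (auto simp: bs_mult_def count_a_def)
  next
    case Ainv
    thus ?thesis using represented_by_add[OF ys(1) m, of "-1"] wt[of "-1"] ys(2)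
      by (intro exI[of _ "(hd ys - 1) # tl ys"]) (auto simp: bs_mult_def count_a_def)
  next
    case T
    thus ?thesis using represented_by_mult[OF k m ys(1)] rot ys(2)
      by (intro exI[of _ "rotate (m - 1) ys"]) (auto simp: bs_mult_def count_a_def)
  next
    case Tinv
    moreover have "digit_weight (rotate1 ys) = digit_weight ys" using rot[of 1] by simp
    ultimately show ?thesis using represented_by_divide[OF k m ys(1)] ys(2)
      by (intro exI[of _ "rotate 1 ys"]) (auto simp: bs_mult_def count_a_def)
  qed
qed

lemma bs_conj_digits_of_word:
  assumes k: "k \<ge> 2" and m: "m \<ge> 1" and n: "snd (bs_eval k w) = int m \<or> snd (bs_eval k w) = - int m"
  obtains ys where "length ys = m" "digit_weight ys \<le> int (count_a w)"
    "bs_conj k (bs_eval k w) (of_int (digit_value (int k) ys), snd (bs_eval k w))"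
proof -
  have k1: "k \<ge> 1" using k by simp
  obtain ys z where ys: "length ys = m" "digit_weight ys \<le> int (count_a w)" "kadic k z"
    "fst (bs_eval k w) = of_int (digit_value (int k) ys) + of_int (int k ^ m - 1) * z"
    using digits_of_word[OF k m] unfolding represented_by_def by blast
  obtain u where u: "u \<noteq> 0" "kadic k u" "kadic k (1 / u)"
    "1 - base k powi snd (bs_eval k w) = of_int (int k ^ m - 1) * u"
    using one_minus_powi_eq[OF k1 n] by blast
  have "of_int (digit_value (int k) ys)
      = base k powi 0 * fst (bs_eval k w) + (- (z * (1 / u))) * (1 - base k powi snd (bs_eval k w))"
    using ys(4) u(1,4) by simp
  hence "bs_conj k (bs_eval k w) (of_int (digit_value (int k) ys), snd (bs_eval k w))"
    unfolding bs_conj_iff[OF k1] using kadic_uminus[OF kadic_mult[OF ys(3) u(3)]]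
    by (metis fst_conv snd_conv)
  thus ?thesis using that ys(1,2) by blast
qed

definition plus_digits :: "nat \<Rightarrow> int list \<Rightarrow> bool" where
  "plus_digits k xs \<longleftrightarrow> (let r = int (k div 2) in
     bounded r xs \<and> (even k \<longrightarrow> even_cond_plus r xs)
     \<and> \<not> (odd k \<and> (\<exists>n\<ge>1. xs = replicate n (- r)))
     \<and> \<not> (even k \<and> (\<exists>j\<ge>1. xs = concat (replicate j [- r + 1, - r])
                          \<or> xs = concat (replicate j [- r, - r + 1]))))"

definition minus_digits :: "nat \<Rightarrow> int list \<Rightarrow> bool" where
  "minus_digits k xs \<longleftrightarrow> (let r = int (k div 2) in
     bounded r xs \<and> (even k \<longrightarrow> even_cond_minus r xs)
     \<and> \<not> (odd k \<and> (\<exists>n\<ge>1. xs = replicate n (- r)))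
     \<and> \<not> (even k \<and> (\<exists>j\<ge>1. xs = concat (replicate j [r, r - 1])
                          \<or> xs = concat (replicate j [r - 1, r]))))"

lemma calA_plus_eq: "calA_plus k = plus_word ` Collect (plus_digits k)"
proof -
  have rep: "concat (replicate m (apow a @ [T])) = plus_word (replicate m a)"
    "concat (replicate j (apow a @ [T] @ apow b @ [T])) = plus_word (concat (replicate j [a, b]))"
    for m j a b by (simp_all add: plus_word_def) (induction j; simp add: plus_word_def)
  have inj: "plus_word xs = plus_word ys \<longleftrightarrow> xs = ys" for xs ys using plus_word_inj by blast
  show ?thesis
    unfolding calA_plus_def plus_digits_def Let_def rep by (auto simp: inj image_iff)
qed

lemma calA_minus_eq: "calA_minus k = minus_word ` Collect (minus_digits k)"
proof -
  have rep: "concat (replicate m ([Tinv] @ apow a)) = minus_word (replicate m a)"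
    "concat (replicate j ([Tinv] @ apow a @ [Tinv] @ apow b))
        = minus_word (concat (replicate j [a, b]))"
    for m j a b by (simp_all add: minus_word_def) (induction j; simp add: minus_word_def)
  have inj: "minus_word xs = minus_word ys \<longleftrightarrow> xs = ys" for xs ys using minus_word_inj by blast
  show ?thesis
    unfolding calA_minus_def minus_digits_def Let_def rep by (auto simp: inj image_iff)
qed

context periodic_digits
begin

lemma replicate_length_iff:
  "length xs = m \<Longrightarrow> (\<exists>n\<ge>1. xs = replicate n c) \<longleftrightarrow> xs = replicate m c"
  using m_pos by auto

lemma plus_digits_iff:
  assumes kk: "k = int kn" and rr: "r = int (kn div 2)" and l: "length xs = m"
  shows "plus_digits kn xs \<longleftrightarrow> reduced (cyc xs) \<and> \<not> exceptional_neg (cyc xs)"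
proof -
  have ev: "k = 2*r \<longleftrightarrow> even kn" using kk rr by presburger
  show ?thesis
  proof (cases "even kn")
    case True
    hence e: "k = 2*r" using ev by simp
    show ?thesis unfolding plus_digits_def Let_def rr[symmetric] reduced_cyc_iff[OF l]
        exceptional_neg_even_iff[OF l e] using True e by simp
  next
    case False
    hence e: "k \<noteq> 2*r" using ev by simp
    show ?thesis unfolding plus_digits_def Let_def rr[symmetric] reduced_cyc_iff[OF l]
        exceptional_neg_odd_iff[OF l e] replicate_length_iff[OF l] using False e by simp
  qed
qed

text \<open>The words removed from \<open>calA_minus\<close> are those of \<open>exceptional_neg\<close> for odd \<open>k\<close>
  but of \<open>exceptional_pos\<close> for even \<open>k\<close>.\<close>

lemma minus_digits_iff:
  assumes kk: "k = int kn" and rr: "r = int (kn div 2)" and l: "length xs = m"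
  shows "minus_digits kn xs \<longleftrightarrow>
    reduced (cyc (rev xs)) \<and> \<not> (if even kn then exceptional_pos else exceptional_neg)
      (cyc (rev xs))"
proof -
  have ev: "k = 2*r \<longleftrightarrow> even kn" using kk rr by presburger
  show ?thesis
  proof (cases "even kn")
    case True
    hence e: "k = 2*r" using ev by simp
    have i: "(if even kn then exceptional_pos else exceptional_neg) = exceptional_pos" using True
      by simp
    show ?thesis unfolding minus_digits_def Let_def rr[symmetric] reduced_cyc_rev_iff[OF l] i
        exceptional_pos_even_rev_iff[OF l e] using True e by simp
  next
    case False
    hence e: "k \<noteq> 2*r" using ev by simp
    have i: "(if even kn then exceptional_pos else exceptional_neg) = exceptional_neg" using False
      by simp
    show ?thesis unfolding minus_digits_def Let_def rr[symmetric] reduced_cyc_rev_iff[OF l] i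
        exceptional_neg_odd_rev_iff[OF l e] replicate_length_iff[OF l] using False e by simp
  qed
qed

end

lemma periodic_digits_inst: "k \<ge> 2 \<Longrightarrow> m \<ge> 1 \<Longrightarrow> periodic_digits (int k) m (int (k div 2))"
  by unfold_locales (auto simp: zdiv_int)

lemma plus_digits_exist:
  assumes "k \<ge> 2" "m \<ge> 1"
  shows "\<exists>xs. length xs = m \<and> plus_digits k xs \<and> (int k ^ m - 1) dvd (digit_value (int k) xs - v)"
proof -
  interpret periodic_digits "int k" m "int (k div 2)" by (rule periodic_digits_inst[OF assms])
  obtain xs where "length xs = m" "reduced (cyc xs)" "\<not> exceptional_neg (cyc xs)"
    "modulus dvd (digit_value (int k) xs - v)"
    using reduced_digits_exist[of exceptional_neg v] by blast
  thus ?thesis using plus_digits_iff[OF refl refl] modulus_def by auto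
qed

lemma minus_digits_exist:
  assumes "k \<ge> 2" "m \<ge> 1"
  shows "\<exists>xs. length xs = m \<and> minus_digits k xs
      \<and> (int k ^ m - 1) dvd (digit_value (int k) (rev xs) - v)"
proof -
  interpret periodic_digits "int k" m "int (k div 2)" by (rule periodic_digits_inst[OF assms])
  define X where "X = (if even k then exceptional_pos else exceptional_neg)"
  have X: "X = exceptional_pos \<or> X = exceptional_neg" unfolding X_def by simp
  obtain ys where ys: "length ys = m" "reduced (cyc ys)" "\<not> X (cyc ys)"
    "modulus dvd (digit_value (int k) ys - v)"
    using reduced_digits_exist[OF X, of v] by blast
  have "minus_digits k (rev ys)" using minus_digits_iff[OF refl refl, of "rev ys"] ys X_def by simp
  thus ?thesis using ys modulus_def by (intro exI[of _ "rev ys"]) auto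
qed

lemma plus_digits_unique:
  assumes "k \<ge> 2" "m \<ge> 1" "length xs = m" "length ys = m" "plus_digits k xs" "plus_digits k ys"
    "(int k ^ m - 1) dvd (digit_value (int k) ys - int k ^ j * digit_value (int k) xs)"
  shows "\<exists>n. ys = rotate n xs"
proof -
  interpret periodic_digits "int k" m "int (k div 2)" by (rule periodic_digits_inst[OF assms(1,2)])
  show ?thesis using reduced_digits_unique[of exceptional_neg xs ys j] assms
      plus_digits_iff[OF refl refl] modulus_def by auto
qed

lemma minus_digits_unique:
  assumes "k \<ge> 2" "m \<ge> 1" "length xs = m" "length ys = m" "minus_digits k xs" "minus_digits k ys"
    "(int k ^ m - 1) dvd (digit_value (int k) (rev ys) - int k ^ j * digit_value (int k) (rev xs))"
  shows "\<exists>n. rev ys = rotate n (rev xs)"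
proof -
  interpret periodic_digits "int k" m "int (k div 2)" by (rule periodic_digits_inst[OF assms(1,2)])
  define X where "X = (if even k then exceptional_pos else exceptional_neg)"
  have X: "X = exceptional_pos \<or> X = exceptional_neg" unfolding X_def by simp
  show ?thesis
    using reduced_digits_unique[OF X, of "rev xs" "rev ys" j] assms
      minus_digits_iff[OF refl refl, of xs] minus_digits_iff[OF refl refl, of ys] modulus_def X_def
        by auto
qed

lemma plus_digits_weight_le:
  assumes "k \<ge> 2" "m \<ge> 1" "length xs = m" "length ys = m" "plus_digits k xs"
    "(int k ^ m - 1) dvd (digit_value (int k) xs - int k ^ j * digit_value (int k) ys)"
  shows "digit_weight xs \<le> digit_weight ys"
proof -
  interpret periodic_digits "int k" m "int (k div 2)" by (rule periodic_digits_inst[OF assms(1,2)])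
  show ?thesis
    using reduced_digits_weight_le[of xs ys j] assms plus_digits_iff[OF refl refl] modulus_def
    by auto
qed

lemma minus_digits_weight_le:
  assumes "k \<ge> 2" "m \<ge> 1" "length xs = m" "length ys = m" "minus_digits k xs"
    "(int k ^ m - 1) dvd (digit_value (int k) (rev xs) - int k ^ j * digit_value (int k) ys)"
  shows "digit_weight xs \<le> digit_weight ys"
proof -
  interpret periodic_digits "int k" m "int (k div 2)" by (rule periodic_digits_inst[OF assms(1,2)])
  have "digit_weight (rev xs) \<le> digit_weight ys"
    using reduced_digits_weight_le[of "rev xs" ys j] assms minus_digits_iff[OF refl refl]
      modulus_def
    by auto
  thus ?thesis by (simp add: digit_weight_rev)
qed

lemma plus_digits_nonempty: "plus_digits k xs \<Longrightarrow> xs \<noteq> []"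
  unfolding plus_digits_def Let_def bounded_def by simp

lemma minus_digits_nonempty: "minus_digits k xs \<Longrightarrow> xs \<noteq> []"
  unfolding minus_digits_def Let_def bounded_def by simp

lemma calA_cases:
  assumes "w \<in> calA k"
  obtains xs where "w = plus_word xs" "plus_digits k xs"
    | xs where "w = minus_word xs" "minus_digits k xs"
  using assms unfolding calA_def calA_plus_eq calA_minus_eq by blast

lemma calA_snd_nonzero:
  assumes "k \<ge> 1" "w \<in> calA k"
  shows "snd (bs_eval k w) \<noteq> 0"
  using assms(2)
  by (cases rule: calA_cases) (use assms(1) plus_digits_nonempty minus_digits_nonempty in
      \<open>auto simp: bs_eval_plus_word bs_eval_minus_word\<close>)

lemma calA_conj_exists:
  assumes k: "k \<ge> 2" and g: "g \<in> bs_group k" and n: "snd g \<noteq> 0"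
  shows "\<exists>w\<in>calA k. bs_conj k (bs_eval k w) g"
proof -
  have k1: "k \<ge> 1" using k by simp
  obtain a where ga: "bs_conj k g (of_int a, snd g)" using bs_conj_of_int[OF k1 g] by blast
  define m where "m = nat \<bar>snd g\<bar>"
  have m: "m \<ge> 1" "snd g = int m \<or> snd g = - int m" using n unfolding m_def by auto
  have conj_to_g: "bs_conj k h g" if "bs_conj k h (of_int b, snd g)"
    "(int k ^ m - 1) dvd (b - a)" for h b
  proof -
    have "bs_conj k (of_int b, snd g) (of_int a, snd g)"
      unfolding bs_conj_int_iff[OF k1 m(2,1)] using that(2)
        by (intro exI[of _ 0]) (simp add: dvd_diff_commute)
    thus ?thesis using bs_conj_trans[OF k1 that(1)] bs_conj_sym[OF k1 ga] bs_conj_trans[OF k1]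
      by blast
  qed
  show ?thesis
  proof (cases "snd g > 0")
    case True
    obtain xs where xs: "length xs = m" "plus_digits k xs"
      "(int k ^ m - 1) dvd (digit_value (int k) xs - a)"
      using plus_digits_exist[OF k m(1)] by blast
    have "bs_conj k (bs_eval k (plus_word xs)) g"
      using conj_to_g[OF _ xs(3)] bs_conj_refl[OF k1] True xs(1) unfolding m_def
      by (simp add: bs_eval_plus_word[OF k1])
    moreover have "plus_word xs \<in> calA k" unfolding calA_def calA_plus_eq using xs(2) by blast
    ultimately show ?thesis by blast
  next
    case False
    obtain xs where xs: "length xs = m" "minus_digits k xs"
      "(int k ^ m - 1) dvd (digit_value (int k) (rev xs) - a)"
      using minus_digits_exist[OF k m(1)] by blast
    have "bs_conj k (bs_eval k (minus_word xs)) g"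
      using conj_to_g[OF _ xs(3)] bs_conj_minus_word[OF k1, of xs] False n xs(1) unfolding m_def
      by simp
    moreover have "minus_word xs \<in> calA k" unfolding calA_def calA_minus_eq using xs(2) by blast
    ultimately show ?thesis by blast
  qed
qed

lemma plus_words_conj_rotate:
  assumes k: "k \<ge> 2" and xs: "plus_digits k xs" and ys: "plus_digits k ys"
    and c: "bs_conj k (bs_eval k (plus_word xs)) (bs_eval k (plus_word ys))"
  shows "\<exists>i. plus_word ys = rotate i (plus_word xs)"
proof -
  have k1: "k \<ge> 1" using k by simp
  define m where "m = length xs"
  have m: "m \<ge> 1" using plus_digits_nonempty[OF xs] unfolding m_def by (cases xs) auto
  have c': "bs_conj k (of_int (digit_value (int k) xs), int m)
      (of_int (digit_value (int k) ys), int m)"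
    and l: "length ys = m"
    using c bs_conj_iff[OF k1] unfolding bs_eval_plus_word[OF k1] m_def by auto
  then obtain j where "(int k ^ m - 1) dvd (digit_value (int k) ys
        - int k ^ j * digit_value (int k) xs)"
    using bs_conj_int_iff[OF k1 _ m] by blast
  then obtain n where "ys = rotate n xs" using plus_digits_unique[OF k m m_def[symmetric] l xs ys]
    by blast
  thus ?thesis using plus_word_rotate by blast
qed

lemma minus_words_conj_rotate:
  assumes k: "k \<ge> 2" and xs: "minus_digits k xs" and ys: "minus_digits k ys"
    and c: "bs_conj k (bs_eval k (minus_word xs)) (bs_eval k (minus_word ys))"
  shows "\<exists>i. minus_word ys = rotate i (minus_word xs)"
proof -
  have k1: "k \<ge> 1" using k by simp
  define m where "m = length xs"
  have m: "m \<ge> 1" using minus_digits_nonempty[OF xs] unfolding m_def by (cases xs) auto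
  have l: "length ys = m" using c bs_conj_iff[OF k1] unfolding bs_eval_minus_word[OF k1] m_def
    by auto
  have "bs_conj k (of_int (digit_value (int k) (rev xs)), - int m)
      (of_int (digit_value (int k) (rev ys)), - int m)"
    using bs_conj_minus_word[OF k1, of xs] bs_conj_minus_word[OF k1, of ys] c l
      bs_conj_sym[OF k1] bs_conj_trans[OF k1] unfolding m_def by metis
  then obtain j where "(int k ^ m - 1) dvd (digit_value (int k) (rev ys)
        - int k ^ j * digit_value (int k) (rev xs))"
    using bs_conj_int_iff[OF k1 _ m] by blast
  then obtain n where "rev ys = rotate n (rev xs)"
    using minus_digits_unique[OF k m m_def[symmetric] l xs ys] by blast
  then obtain n' where "ys = rotate n' xs" using rev_rotate[of n "rev xs"] by (metis rev_rev_ident)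
  thus ?thesis using minus_word_rotate by blast
qed

lemma calA_conj_iff_rotate:
  assumes k: "k \<ge> 2" and w1: "w1 \<in> calA k" and w2: "w2 \<in> calA k"
  shows "bs_conj k (bs_eval k w1) (bs_eval k w2) \<longleftrightarrow> (\<exists>i. w2 = rotate i w1)"
proof
  have k1: "k \<ge> 1" using k by simp
  assume c: "bs_conj k (bs_eval k w1) (bs_eval k w2)"
  hence s: "snd (bs_eval k w2) = snd (bs_eval k w1)" using bs_conj_iff[OF k1] by blast
  have pos: "snd (bs_eval k (plus_word xs)) > 0" if "plus_digits k xs" for xs
    using plus_digits_nonempty[OF that] by (simp add: bs_eval_plus_word[OF k1])
  have neg: "snd (bs_eval k (minus_word xs)) < 0" if "minus_digits k xs" for xs
    using minus_digits_nonempty[OF that] by (simp add: bs_eval_minus_word[OF k1])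
  show "\<exists>i. w2 = rotate i w1"
  proof (cases rule: calA_cases[OF w1])
    case w1: (1 xs)
    show ?thesis
    proof (cases rule: calA_cases[OF w2])
      case (1 ys) thus ?thesis using plus_words_conj_rotate[OF k w1(2)] c w1(1) by blast
    next
      case (2 ys) thus ?thesis using pos[OF w1(2)] neg[of ys] s w1(1) by simp
    qed
  next
    case w1: (2 xs)
    show ?thesis
    proof (cases rule: calA_cases[OF w2])
      case (1 ys) thus ?thesis using neg[OF w1(2)] pos[of ys] s w1(1) by simp
    next
      case (2 ys) thus ?thesis using minus_words_conj_rotate[OF k w1(2)] c w1(1) by blast
    qed
  qed
next
  assume "\<exists>i. w2 = rotate i w1"
  then obtain i where "w2 = rotate i w1" by blast
  hence "w1 = take (i mod length w1) w1 @ drop (i mod length w1) w1"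
    "w2 = drop (i mod length w1) w1 @ take (i mod length w1) w1"
    by (simp_all add: rotate_drop_take)
  thus "bs_conj k (bs_eval k w1) (bs_eval k w2)" using bs_conj_rotate[of k] k
    by (metis one_le_numeral order_trans)
qed

lemma plus_word_length_le:
  assumes k: "k \<ge> 2" and xs: "plus_digits k xs"
    and c: "bs_conj k (bs_eval k w) (bs_eval k (plus_word xs))"
  shows "length (plus_word xs) \<le> length w"
proof -
  have k1: "k \<ge> 1" using k by simp
  define m where "m = length xs"
  have m: "m \<ge> 1" using plus_digits_nonempty[OF xs] unfolding m_def by (cases xs) auto
  have sw: "snd (bs_eval k w) = int m" using c bs_conj_iff[OF k1]
    unfolding bs_eval_plus_word[OF k1] m_def by auto
  obtain ys where ys: "length ys = m" "digit_weight ys \<le> int (count_a w)"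
    "bs_conj k (bs_eval k w) (of_int (digit_value (int k) ys), int m)"
    using bs_conj_digits_of_word[OF k m, of w] sw by auto
  have "bs_conj k (of_int (digit_value (int k) ys), int m) (of_int (digit_value (int k) xs), int m)"
    using bs_conj_trans[OF k1 bs_conj_sym[OF k1 ys(3)] c] unfolding bs_eval_plus_word[OF k1] m_def .
  then obtain j where "(int k ^ m - 1) dvd (digit_value (int k) xs
        - int k ^ j * digit_value (int k) ys)"
    using bs_conj_int_iff[OF k1 _ m] by blast
  hence "digit_weight xs \<le> digit_weight ys"
    using plus_digits_weight_le[OF k m m_def[symmetric] ys(1) xs] by blast
  moreover have "int m \<le> int (count_t w)" using abs_snd_bs_eval_le[of k w] sw by simp
  ultimately show ?thesis
    using length_plus_word[of xs] length_eq_count_a_count_t[of w] ys(2) unfolding m_def by linarith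
qed

lemma minus_word_length_le:
  assumes k: "k \<ge> 2" and xs: "minus_digits k xs"
    and c: "bs_conj k (bs_eval k w) (bs_eval k (minus_word xs))"
  shows "length (minus_word xs) \<le> length w"
proof -
  have k1: "k \<ge> 1" using k by simp
  define m where "m = length xs"
  have m: "m \<ge> 1" using minus_digits_nonempty[OF xs] unfolding m_def by (cases xs) auto
  have sw: "snd (bs_eval k w) = - int m" using c bs_conj_iff[OF k1]
    unfolding bs_eval_minus_word[OF k1] m_def by auto
  obtain ys where ys: "length ys = m" "digit_weight ys \<le> int (count_a w)"
    "bs_conj k (bs_eval k w) (of_int (digit_value (int k) ys), - int m)"
    using bs_conj_digits_of_word[OF k m, of w] sw by auto
  have "bs_conj k (of_int (digit_value (int k) ys), - int m)
      (of_int (digit_value (int k) (rev xs)), - int m)"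
    using bs_conj_trans[OF k1 bs_conj_trans[OF k1 bs_conj_sym[OF k1 ys(3)] c]
        bs_conj_minus_word[OF k1]]
    unfolding m_def .
  then obtain j where "(int k ^ m - 1) dvd (digit_value (int k) (rev xs)
        - int k ^ j * digit_value (int k) ys)"
    using bs_conj_int_iff[OF k1 _ m] by blast
  hence "digit_weight xs \<le> digit_weight ys"
    using minus_digits_weight_le[OF k m m_def[symmetric] ys(1) xs] by blast
  moreover have "int m \<le> int (count_t w)" using abs_snd_bs_eval_le[of k w] sw by simp
  ultimately show ?thesis
    using length_minus_word[of xs] length_eq_count_a_count_t[of w] ys(2) unfolding m_def by linarith
qed

lemma calA_length_eq_conj_class_length:
  assumes k: "k \<ge> 2" and w: "w \<in> calA k"
  shows "length w = conj_class_length k (bs_eval k w)"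
  unfolding conj_class_length_def
proof (rule Least_equality[symmetric])
  show "\<exists>w'. length w' = length w \<and> bs_conj k (bs_eval k w') (bs_eval k w)"
    using bs_conj_refl[of k "bs_eval k w"] k by auto
next
  fix n assume "\<exists>w'. length w' = n \<and> bs_conj k (bs_eval k w') (bs_eval k w)"
  then obtain w' where "length w' = n" "bs_conj k (bs_eval k w') (bs_eval k w)" by blast
  with w show "length w \<le> n"
    by (cases rule: calA_cases) (auto dest: plus_word_length_le[OF k] minus_word_length_le[OF k])
qed

theorem corollary4p6:
  fixes k :: nat
  assumes "k \<ge> 2"
  shows "(\<forall>w\<in>calA k. snd (bs_eval k w) \<noteq> 0)
    \<and> (\<forall>g\<in>bs_group k. snd g \<noteq> 0 \<longrightarrow> (\<exists>w\<in>calA k. bs_conj k (bs_eval k w) g))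
    \<and> (\<forall>w1\<in>calA k. \<forall>w2\<in>calA k.
          bs_conj k (bs_eval k w1) (bs_eval k w2) \<longleftrightarrow> (\<exists>i. w2 = rotate i w1))
    \<and> (\<forall>w\<in>calA k. length w = conj_class_length k (bs_eval k w))"
  using assms calA_snd_nonzero calA_conj_exists calA_conj_iff_rotate
    calA_length_eq_conj_class_length
  by auto

end
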